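(* Let $p(x)=a_dx^d+\cdots+a_1x$ be a polynomial with real coefficients, $d\geq2$, with $p(0)=0$ and $p'(0)=\lambda>1$. Suppose that $\mathcal{F}_\infty$, the Fatou component of $p$ containing $\infty$, contains an angular region $$W_\beta=\{z\in\mathbb{C}\setminus\{0\}: |\arg z|<\beta\}$$ for some $\beta>0$. Let $\Phi$ be the solution of $\Phi(\lambda z)=p(\Phi(z))$, $\Phi(0)=0$, $\Phi'(0)=1$. Then $\Phi$ is an entire function, and there is a function $F$, holomorphic and periodic with period $1$ on the strip $\{w\in\mathbb{C}: |\Im w|<\frac{\beta}{\log\lambda}\}$ and taking real values on the real axis, such that for every $\varepsilon>0$ and every $M>0$ $$\Phi(z)=\frac{1}{\sqrt[d-1]{a_d}}\exp\left(z^\rho F(\log_\lambda z)+o\left(|z|^{-M}\right)\right)$$ holds uniformly as $|z|\to\infty$ in $|\arg z|\leq\beta-\varepsilon$, where $\rho=\log_\lambda d$. Moreover, the real part of $z^\rho F(\log_\lambda z)$ is always positive (in this region).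
   Context: $\log_\lambda z=\frac{\log z}{\log\lambda}$ (principal branch). The Fatou set and Julia set of a polynomial are the standard notions from complex dynamics; $\mathcal{F}_\infty$ is the connected component of the Fatou set (in the Riemann sphere) containing $\infty$. *)

theory Defs
  imports "HOL-Complex_Analysis.Complex_Analysis" "HOL-Computational_Algebra.Polynomial"
begin

text \<open>A family of functions is normal on U (in the sense of complex dynamics, i.e.
  with respect to the spherical metric): every sequence from the family has a
  subsequence converging locally uniformly on U either to a finite function or to
  infinity.\<close>
definition normal_family_on :: "complex set \<Rightarrow> (complex \<Rightarrow> complex) set \<Rightarrow> bool" where
  "normal_family_on U \<F> \<longleftrightarrow>
     (\<forall>f :: nat \<Rightarrow> complex \<Rightarrow> complex. (\<forall>n. f n \<in> \<F>) \<longrightarrow>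
        (\<exists>r. strict_mono r \<and>
           ((\<exists>g. \<forall>K. compact K \<and> K \<subseteq> U \<longrightarrow> uniform_limit K (\<lambda>n. f (r n)) g sequentially)
            \<or> (\<forall>K. compact K \<and> K \<subseteq> U \<longrightarrow>
                 (\<forall>B. \<forall>\<^sub>F n in sequentially. \<forall>z\<in>K. B \<le> norm (f (r n) z))))))"

definition fatou_set :: "complex poly \<Rightarrow> complex set" where
  "fatou_set p = {z. \<exists>U. open U \<and> z \<in> U \<and> normal_family_on U (range (\<lambda>n. poly p ^^ n))}"

text \<open>Finite part of the Fatou component containing infinity: the points of the
  Fatou set lying in the same connected component (of the finite Fatou set) as all
  sufficiently large points.  Since removing the point infinity from an open connected
  subset of the Riemann sphere leaves it connected, this is exactly
  the component of infinity in the sphere, minus infinity.\<close>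
definition fatou_inf :: "complex poly \<Rightarrow> complex set" where
  "fatou_inf p = {z. \<exists>R. \<forall>w. R < norm w \<longrightarrow> connected_component (fatou_set p) z w}"

definition angular_region :: "real \<Rightarrow> complex set" where
  "angular_region \<beta> = {z. z \<noteq> 0 \<and> \<bar>Arg z\<bar> < \<beta>}"

definition log_base_c :: "real \<Rightarrow> complex \<Rightarrow> complex" where
  "log_base_c lam z = Ln z / of_real (ln lam)"

end

theory Submission
  imports Defs
begin

(* Write psi w = Phi (lam powr w), so that psi (w + 1) = p (psi w).  As Phi is tangent to the
   identity at 0, psi maps the far left of the strip |Im w| < beta / ln lam into the sector, hence
   into the Fatou component of infinity, and psi (w + n) escapes to infinity locally uniformly on
   the strip.  There the logarithm L of a_d^(1/(d-1)) psi satisfies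
   L (w + 1) = d L (w) + O (1 / |psi w|), so B = lim L (w + n) / d^n exists, is holomorphic, real on
   the real axis, satisfies B (w + 1) = d B (w) and has positive real part; moreover L - B is of
   order exp (- d^(Re w)), smaller than any power of |z| = lam^(Re w).  The periodic function is
   F (w) = B (w) / d^w, for which z^rho F (log_lam z) = B (log_lam z). *)

section \<open>Escape to infinity\<close>

lemma norm_poly_minus_lead_monom_le:
  fixes p :: "complex poly"
  assumes "degree p = d" "1 \<le> norm u"
  shows "norm (poly p u - lead_coeff p * u ^ d) \<le> (\<Sum>i<d. norm (coeff p i)) * norm u ^ (d - 1)"
proof -
  have "poly p u = (\<Sum>i<d. coeff p i * u ^ i) + lead_coeff p * u ^ d"
    using assms(1) by (simp add: poly_altdef lessThan_Suc_atMost[symmetric])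
  then have "norm (poly p u - lead_coeff p * u ^ d) = norm (\<Sum>i<d. coeff p i * u ^ i)"
    by simp
  also have "\<dots> \<le> (\<Sum>i<d. norm (coeff p i) * norm u ^ (d - 1))"
  proof (rule order_trans[OF norm_sum sum_mono])
    fix i assume "i \<in> {..<d}"
    then have "norm u ^ i \<le> norm u ^ (d - 1)"
      using assms(2) by (intro power_increasing) auto
    then show "norm (coeff p i * u ^ i) \<le> norm (coeff p i) * norm u ^ (d - 1)"
      by (simp add: norm_mult norm_power mult_left_mono)
  qed
  also have "\<dots> = (\<Sum>i<d. norm (coeff p i)) * norm u ^ (d - 1)"
    by (simp add: sum_distrib_right)
  finally show ?thesis .
qed

lemma poly_over_lead_monom_bound:
  fixes p :: "complex poly"
  assumes "degree p = d" "p \<noteq> 0"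
  obtains C where "C > 0"
    "\<And>u. 1 \<le> norm u \<Longrightarrow> norm (poly p u / (lead_coeff p * u ^ d) - 1) \<le> C / norm u"
proof
  define a where "a = lead_coeff p"
  have a: "a \<noteq> 0" using assms(2) by (simp add: a_def)
  define S where "S = (\<Sum>i<d. norm (coeff p i))"
  show "S / norm a + 1 > 0"
    using a by (simp add: S_def add_nonneg_pos sum_nonneg)
  fix u :: complex assume u: "1 \<le> norm u"
  then have u0: "u \<noteq> 0" by auto
  have "poly p u / (a * u ^ d) - 1 = (poly p u - a * u ^ d) / (a * u ^ d)"
    using a u0 by (simp add: field_simps)
  then have "norm (poly p u / (a * u ^ d) - 1) = norm (poly p u - a * u ^ d) / (norm a * norm u ^ d)"
    by (simp add: norm_divide norm_mult norm_power)
  also have "\<dots> \<le> S * norm u ^ (d - 1) / (norm a * norm u ^ d)"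
    using norm_poly_minus_lead_monom_le[OF assms(1) u]
    by (intro divide_right_mono) (auto simp: S_def a_def)
  also have "\<dots> = (S / norm a) / norm u"
  proof (cases d)
    case (Suc m) then show ?thesis using a u0 by (simp add: field_simps)
  qed (simp add: S_def)
  also have "\<dots> \<le> (S / norm a + 1) / norm u"
    by (intro divide_right_mono) auto
  finally show "norm (poly p u / (lead_coeff p * u ^ d) - 1) \<le> (S / norm a + 1) / norm u"
    by (simp add: a_def)
qed

definition escape_radius :: "complex poly \<Rightarrow> real \<Rightarrow> bool" where
  "escape_radius p R \<longleftrightarrow> R > 0 \<and> (\<forall>u. R \<le> norm u \<longrightarrow> 2 * norm u \<le> norm (poly p u))"

lemma escape_radiusD:
  "escape_radius p R \<Longrightarrow> R > 0"
  "escape_radius p R \<Longrightarrow> R \<le> norm u \<Longrightarrow> 2 * norm u \<le> norm (poly p u)"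
  by (auto simp: escape_radius_def)

lemma escape_radius_mono: "escape_radius p R \<Longrightarrow> R \<le> R' \<Longrightarrow> escape_radius p R'"
  by (auto simp: escape_radius_def)

lemma escape_radius_exists:
  fixes p :: "complex poly"
  assumes "degree p \<ge> 2"
  obtains R where "escape_radius p R"
proof -
  define a where "a = lead_coeff p"
  have a: "a \<noteq> 0" "p \<noteq> 0" using assms by (auto simp: a_def)
  obtain C where C: "C > 0"
    "\<And>u. 1 \<le> norm u \<Longrightarrow> norm (poly p u / (a * u ^ degree p) - 1) \<le> C / norm u"
    using poly_over_lead_monom_bound[OF refl a(2)] unfolding a_def by blast
  define R where "R = max 1 (max (4 * C) (4 / norm a))"
  have "2 * norm u \<le> norm (poly p u)" if u: "R \<le> norm u" for u
  proof -
    have u1: "1 \<le> norm u" "4 * C \<le> norm u" "4 / norm a \<le> norm u"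
      using u by (auto simp: R_def)
    then have u0: "u \<noteq> 0" by auto
    have "C / norm u \<le> 1 / 4" using u1 by (simp add: divide_le_eq)
    then have "norm (poly p u / (a * u ^ degree p) - 1) \<le> 1 / 4" using C(2)[OF u1(1)] by linarith
    then have "3 / 4 \<le> norm (poly p u / (a * u ^ degree p))"
      using norm_triangle_ineq2[of 1 "poly p u / (a * u ^ degree p)"] by (simp add: norm_minus_commute)
    then have "3 / 4 * (norm a * norm u ^ degree p) \<le> norm (poly p u)"
      using a u0 by (simp add: norm_divide norm_mult norm_power field_simps)
    moreover have "4 * norm u \<le> norm a * norm u ^ degree p"
    proof -
      have "4 * norm u \<le> (norm a * norm u) * norm u"
        using u1 a by (intro mult_right_mono) (auto simp: field_simps)
      also have "\<dots> \<le> norm a * norm u ^ degree p"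
        using u1 assms by (simp add: power2_eq_square[symmetric] mult.assoc mult_left_mono power_increasing)
      finally show ?thesis .
    qed
    ultimately show ?thesis using norm_ge_zero[of u] by linarith
  qed
  then have "escape_radius p R" by (simp add: escape_radius_def R_def)
  then show ?thesis by (rule that)
qed

lemma escape_radius_funpow_growth:
  assumes "escape_radius p R" "R \<le> norm x"
  shows "2 ^ n * norm x \<le> norm ((poly p ^^ n) x)"
proof (induction n)
  case (Suc n)
  have "R \<le> 1 * norm x" using assms(2) by simp
  also have "\<dots> \<le> 2 ^ n * norm x" by (intro mult_right_mono) auto
  finally have "2 * norm ((poly p ^^ n) x) \<le> norm ((poly p ^^ Suc n) x)"
    using Suc escape_radiusD(2)[OF assms(1)] by simp
  then show ?case using Suc by simp
qed simp

lemma escape_radius_funpow_growth':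
  assumes "escape_radius p R" "R \<le> norm ((poly p ^^ m) x)" "m \<le> n"
  shows "2 ^ (n - m) * norm ((poly p ^^ m) x) \<le> norm ((poly p ^^ n) x)"
  using escape_radius_funpow_growth[OF assms(1,2), of "n - m"] assms(3)
  by (simp add: funpow_add[symmetric, THEN fun_cong, simplified])

lemma escape_radius_escaped_stays:
  assumes "escape_radius p R" "R < norm ((poly p ^^ m) x)" "m \<le> n"
  shows "R < norm ((poly p ^^ n) x)"
proof -
  have "norm ((poly p ^^ m) x) \<le> 2 ^ (n - m) * norm ((poly p ^^ m) x)"
    by (simp add: mult_le_cancel_right1)
  moreover have "2 ^ (n - m) * norm ((poly p ^^ m) x) \<le> norm ((poly p ^^ n) x)"
    using escape_radius_funpow_growth'[OF assms(1) _ assms(3)] assms(2) by simp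
  ultimately show ?thesis using assms(2) by linarith
qed

lemma escape_radius_escaped_tends_to_infinity:
  assumes "escape_radius p R" "R < norm ((poly p ^^ m) x)"
  shows "filterlim (\<lambda>n. norm ((poly p ^^ n) x)) at_top sequentially"
  unfolding filterlim_at_top
proof
  fix Z :: real
  obtain k where k: "Z / R < 2 ^ k" using real_arch_pow[of 2 "Z / R"] by auto
  have "Z \<le> norm ((poly p ^^ n) x)" if "m + k \<le> n" for n
  proof -
    have "Z \<le> 2 ^ k * R" using k escape_radiusD(1)[OF assms(1)] by (simp add: field_simps)
    also have "\<dots> \<le> 2 ^ (n - m) * norm ((poly p ^^ m) x)"
      using that assms(2) escape_radiusD(1)[OF assms(1)]
      by (intro mult_mono power_increasing) auto
    also have "\<dots> \<le> norm ((poly p ^^ n) x)"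
      using escape_radius_funpow_growth'[OF assms(1)] assms(2) that by simp
    finally show ?thesis .
  qed
  then show "\<forall>\<^sub>F n in sequentially. Z \<le> norm ((poly p ^^ n) x)"
    unfolding eventually_sequentially by blast
qed

definition escaping_set :: "complex poly \<Rightarrow> real \<Rightarrow> complex set" where
  "escaping_set p R = {x. \<exists>n. R < norm ((poly p ^^ n) x)}"

text \<open>A subsequence of iterates converging at an escaping point would keep its orbit bounded.\<close>

lemma normal_family_escape_spreads:
  assumes R: "escape_radius p R"
    and U: "normal_family_on U (range (\<lambda>n. poly p ^^ n))" "U \<inter> escaping_set p R \<noteq> {}"
  shows "U \<subseteq> escaping_set p R"
proof
  fix x assume "x \<in> U"
  obtain y m where y: "y \<in> U" "R < norm ((poly p ^^ m) y)"
    using U(2) by (auto simp: escaping_set_def)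
  obtain r where r: "strict_mono r" and
    cases: "(\<exists>g. \<forall>K. compact K \<and> K \<subseteq> U \<longrightarrow> uniform_limit K (\<lambda>n. poly p ^^ r n) g sequentially)
      \<or> (\<forall>K. compact K \<and> K \<subseteq> U \<longrightarrow> (\<forall>B. \<forall>\<^sub>F n in sequentially. \<forall>z\<in>K. B \<le> norm ((poly p ^^ r n) z)))"
  proof -
    have "\<And>n. poly p ^^ n \<in> range (\<lambda>n. poly p ^^ n)" by simp
    from U(1)[unfolded normal_family_on_def, rule_format, of "\<lambda>n. poly p ^^ n", OF this]
    show thesis using that by blast
  qed
  from cases show "x \<in> escaping_set p R"
  proof
    assume "\<exists>g. \<forall>K. compact K \<and> K \<subseteq> U \<longrightarrow> uniform_limit K (\<lambda>n. poly p ^^ r n) g sequentially"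
    moreover have "compact {y}" "{y} \<subseteq> U" using y(1) by auto
    ultimately obtain g where g: "uniform_limit {y} (\<lambda>n. poly p ^^ r n) g sequentially"
      by blast
    have "(\<lambda>n. norm ((poly p ^^ r n) y)) \<longlonglongrightarrow> norm (g y)"
      using tendsto_uniform_limitI[OF g, of y] by (intro tendsto_norm) simp
    moreover have "filterlim (\<lambda>n. norm ((poly p ^^ r n) y)) at_infinity sequentially"
      using filterlim_compose[OF escape_radius_escaped_tends_to_infinity[OF R y(2)] filterlim_subseq[OF r]]
      by (rule filterlim_at_top_imp_at_infinity)
    ultimately show ?thesis
      by (metis not_tendsto_and_filterlim_at_infinity trivial_limit_sequentially)
  next
    assume "\<forall>K. compact K \<and> K \<subseteq> U \<longrightarrow> (\<forall>B. \<forall>\<^sub>F n in sequentially. \<forall>z\<in>K. B \<le> norm ((poly p ^^ r n) z))"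
    from this[rule_format, of "{x}" "R + 1"] have "\<forall>\<^sub>F n in sequentially. R + 1 \<le> norm ((poly p ^^ r n) x)"
      using \<open>x \<in> U\<close> by simp
    then obtain n where "R + 1 \<le> norm ((poly p ^^ r n) x)"
      by (auto simp: eventually_sequentially)
    then show ?thesis unfolding escaping_set_def by (intro CollectI exI[of _ "r n"]) simp
  qed
qed

text \<open>The union of the domains of normality inside the escaping set and the union of those
  disjoint from it are open and cover the Fatou set; a connected set joining a point of
  \<^const>\<open>fatou_inf\<close> to a large point, which escapes at once, cannot be split by them.\<close>

lemma fatou_inf_escapes:
  assumes R: "escape_radius p R"
  shows "fatou_inf p \<subseteq> escaping_set p R"
proof
  fix z assume "z \<in> fatou_inf p"
  then obtain R1 where R1: "\<And>w. R1 < norm w \<Longrightarrow> connected_component (fatou_set p) z w"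
    unfolding fatou_inf_def by auto
  define normal where "normal U \<longleftrightarrow> open U \<and> normal_family_on U (range (\<lambda>n. poly p ^^ n))" for U
  define A where "A = \<Union>{U. normal U \<and> U \<subseteq> escaping_set p R}"
  define B where "B = \<Union>{U. normal U \<and> U \<inter> escaping_set p R = {}}"
  have "open A" "open B" unfolding A_def B_def normal_def by auto
  have B_esc: "B \<inter> escaping_set p R = {}" unfolding B_def by blast
  then have AB: "A \<inter> B = {}" unfolding A_def by blast
  have cover: "fatou_set p \<subseteq> A \<union> B"
    using normal_family_escape_spreads[OF R] unfolding fatou_set_def A_def B_def normal_def by blast
  define w where "w = complex_of_real (max R1 R + 1)"
  have nw: "norm w = max R1 R + 1" unfolding w_def using escape_radiusD(1)[OF R] by simp
  then have "connected_component (fatou_set p) z w" using R1 by simp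
  then obtain T where T: "connected T" "T \<subseteq> fatou_set p" "z \<in> T" "w \<in> T"
    unfolding connected_component_def by blast
  have "w \<in> escaping_set p R" unfolding escaping_set_def using nw by (intro CollectI exI[of _ 0]) auto
  then have "w \<in> A" using B_esc T(2,4) cover by blast
  have "A \<inter> B \<inter> T = {}" "T \<subseteq> A \<union> B" using AB T(2) cover by auto
  then have "A \<inter> T = {} \<or> B \<inter> T = {}"
    using connectedD[OF T(1) \<open>open A\<close> \<open>open B\<close>] by blast
  then have "z \<in> A" using \<open>w \<in> A\<close> T(2,3,4) cover by blast
  then show "z \<in> escaping_set p R" unfolding A_def by blast
qed

lemma holomorphic_on_funpow_poly: "(poly p ^^ n) holomorphic_on S"
  by (induction n) (auto intro!: holomorphic_intros simp: id_def)

lemma fatou_inf_escapes_uniformly: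
  assumes R: "escape_radius p R" and K: "compact K" "K \<subseteq> fatou_inf p"
  obtains N where "\<And>n x. N \<le> n \<Longrightarrow> x \<in> K \<Longrightarrow> R < norm ((poly p ^^ n) x)"
proof -
  define V where "V n = {x. R < norm ((poly p ^^ n) x)}" for n
  have "open (V n)" for n unfolding V_def
    by (intro open_Collect_less continuous_intros holomorphic_on_imp_continuous_on[OF holomorphic_on_funpow_poly])
  moreover have "K \<subseteq> (\<Union>n. V n)"
    using fatou_inf_escapes[OF R] K(2) unfolding V_def escaping_set_def by blast
  ultimately obtain M where M: "finite M" "K \<subseteq> (\<Union>n\<in>M. V n)"
    using compactE_image[OF K(1), of UNIV V] by metis
  show ?thesis
  proof
    fix n x assume n: "Max (insert 0 M) \<le> n" and x: "x \<in> K"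
    then obtain m where "m \<in> M" "x \<in> V m" using M by blast
    moreover have "m \<le> n" using n M(1) \<open>m \<in> M\<close> by (meson Max_ge finite_insert insertCI order_trans)
    ultimately show "R < norm ((poly p ^^ n) x)"
      using escape_radius_escaped_stays[OF R] unfolding V_def by blast
  qed
qed

lemma fixed_point_notin_fatou_inf:
  assumes "degree p \<ge> 2" "poly p u = u"
  shows "u \<notin> fatou_inf p"
proof
  assume u: "u \<in> fatou_inf p"
  obtain R where R: "escape_radius p R" using escape_radius_exists[OF assms(1)] .
  have "(poly p ^^ n) u = u" for n by (induction n) (use assms(2) in auto)
  then have "R < norm u" using fatou_inf_escapes[OF R] u by (auto simp: escaping_set_def)
  then show False using escape_radiusD(1)[OF R] escape_radiusD(2)[OF R, of u] assms(2) by simp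
qed

section \<open>Uniqueness of linearizers\<close>

lemma funpow_semiconj:
  fixes c :: "'a::monoid_mult"
  assumes "\<And>z. f (c * z) = g (f z)"
  shows "f (c ^ n * z) = (g ^^ n) (f z)"
  by (induction n) (simp_all add: mult.assoc assms)

definition tangent_to_identity :: "(complex \<Rightarrow> complex) \<Rightarrow> bool" where
  "tangent_to_identity f \<longleftrightarrow> (\<forall>\<epsilon>>0. \<exists>\<delta>>0. \<forall>u. norm u < \<delta> \<longrightarrow> norm (f u - u) \<le> \<epsilon> * norm u)"

lemma tangent_to_identityD:
  "tangent_to_identity f \<Longrightarrow> \<epsilon> > 0 \<Longrightarrow> \<exists>\<delta>>0. \<forall>u. norm u < \<delta> \<longrightarrow> norm (f u - u) \<le> \<epsilon> * norm u"
  by (auto simp: tangent_to_identity_def)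

lemma has_field_derivative_1_imp_tangent_to_identity:
  assumes "f 0 = 0" "(f has_field_derivative 1) (at 0)"
  shows "tangent_to_identity f"
  unfolding tangent_to_identity_def
proof (intro allI impI)
  fix \<epsilon> :: real assume "\<epsilon> > 0"
  have "(\<lambda>u. f u / u) \<midarrow>0\<rightarrow> 1"
    using assms has_field_derivative_iff[of f 1 0 UNIV] by simp
  then obtain \<delta> where \<delta>: "\<delta> > 0" "\<And>u. u \<noteq> 0 \<Longrightarrow> norm u < \<delta> \<Longrightarrow> norm (f u / u - 1) < \<epsilon>"
    using LIM_D[OF _ \<open>\<epsilon> > 0\<close>] by force
  have "norm (f u - u) \<le> \<epsilon> * norm u" if "norm u < \<delta>" for u
  proof (cases "u = 0")
    case False
    then have "f u - u = u * (f u / u - 1)" by (simp add: field_simps)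
    then have "norm (f u - u) = norm u * norm (f u / u - 1)" by (simp add: norm_mult)
    also have "\<dots> \<le> norm u * \<epsilon>" using \<delta>(2)[OF False that] by (intro mult_left_mono) auto
    finally show ?thesis by (simp add: mult.commute)
  qed (use assms(1) in simp)
  then show "\<exists>\<delta>>0. \<forall>u. norm u < \<delta> \<longrightarrow> norm (f u - u) \<le> \<epsilon> * norm u" using \<delta>(1) by blast
qed

lemma tangent_to_identity_cnj:
  assumes "tangent_to_identity f"
  shows "tangent_to_identity (\<lambda>z. cnj (f (cnj z)))"
proof -
  have "norm (cnj (f (cnj u)) - u) = norm (f (cnj u) - cnj u)" for u
    by (metis complex_cnj_cnj complex_cnj_diff complex_mod_cnj)
  then show ?thesis using assms unfolding tangent_to_identity_def by (metis complex_mod_cnj)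
qed

lemma norm_power_diff_minus_linear_le:
  fixes a b :: complex
  assumes "norm a \<le> \<rho>" "norm b \<le> \<rho>" "\<rho> \<le> 1"
  shows "norm ((a ^ i - b ^ i) - (if i = 1 then a - b else 0)) \<le> real i * \<rho> * norm (a - b)"
proof -
  have \<rho>: "\<rho> \<ge> 0" using assms(1) norm_ge_zero order_trans by blast
  consider "i \<le> 1" | "i \<ge> 2" by linarith
  then show ?thesis
  proof cases
    case 1 then show ?thesis using \<rho> by (cases i) auto
  next
    case 2
    have "norm (\<Sum>j<i. b ^ (i - Suc j) * a ^ j) \<le> (\<Sum>j<i. \<rho>)"
    proof (rule order_trans[OF norm_sum sum_mono])
      fix j assume j: "j \<in> {..<i}"
      have "norm (b ^ (i - Suc j) * a ^ j) \<le> \<rho> ^ (i - Suc j) * \<rho> ^ j"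
        using assms \<rho> by (simp add: norm_mult norm_power mult_mono power_mono)
      also have "\<dots> = \<rho> ^ (i - 1)" using j by (simp add: power_add[symmetric])
      also have "\<dots> \<le> \<rho> ^ 1" using 2 \<rho> assms(3) by (intro power_decreasing) auto
      finally show "norm (b ^ (i - Suc j) * a ^ j) \<le> \<rho>" by simp
    qed
    then have "norm (a - b) * norm (\<Sum>j<i. b ^ (i - Suc j) * a ^ j) \<le> norm (a - b) * (real i * \<rho>)"
      by (intro mult_left_mono) auto
    moreover have "a ^ i - b ^ i = (a - b) * (\<Sum>j<i. b ^ (i - Suc j) * a ^ j)"
      by (rule power_diff_sumr2)
    ultimately show ?thesis using 2 by (simp add: norm_mult mult_ac)
  qed
qed

lemma poly_minus_linear_part_bound:
  fixes p :: "complex poly"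
  assumes "coeff p 0 = 0" "degree p \<ge> 1"
  obtains K where "K \<ge> 0" "\<And>a b \<rho>. norm a \<le> \<rho> \<Longrightarrow> norm b \<le> \<rho> \<Longrightarrow> \<rho> \<le> 1 \<Longrightarrow>
     norm (poly p a - poly p b - coeff p 1 * (a - b)) \<le> K * \<rho> * norm (a - b)"
proof
  define d where "d = degree p"
  show "(\<Sum>i\<le>d. norm (coeff p i) * real i) \<ge> 0" by (intro sum_nonneg) auto
  fix a b :: complex and \<rho> :: real
  assume ab: "norm a \<le> \<rho>" "norm b \<le> \<rho>" "\<rho> \<le> 1"
  have "coeff p 1 * (a - b) = (\<Sum>i\<le>d. coeff p i * (if i = 1 then a - b else 0))"
    using assms(2) by (simp add: d_def if_distrib sum.delta cong: if_cong)
  then have "poly p a - poly p b - coeff p 1 * (a - b)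
      = (\<Sum>i\<le>d. coeff p i * ((a ^ i - b ^ i) - (if i = 1 then a - b else 0)))"
    by (simp add: poly_altdef d_def right_diff_distrib sum_subtractf)
  also have "norm \<dots> \<le> (\<Sum>i\<le>d. norm (coeff p i) * (real i * \<rho> * norm (a - b)))"
    by (rule order_trans[OF norm_sum sum_mono], simp only: norm_mult)
      (intro mult_left_mono norm_power_diff_minus_linear_le[OF ab] norm_ge_zero)
  also have "\<dots> = (\<Sum>i\<le>d. norm (coeff p i) * real i) * \<rho> * norm (a - b)"
    by (simp add: sum_distrib_right mult.assoc)
  finally show "norm (poly p a - poly p b - coeff p 1 * (a - b))
      \<le> (\<Sum>i\<le>d. norm (coeff p i) * real i) * \<rho> * norm (a - b)" .
qed

lemma tangent_to_identity_norm_le: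
  assumes "tangent_to_identity f"
  obtains r where "r > 0" "\<And>u. norm u < r \<Longrightarrow> norm (f u) \<le> 2 * norm u"
proof -
  obtain r where r: "r > 0" "\<And>u. norm u < r \<Longrightarrow> norm (f u - u) \<le> 1 * norm u"
    using tangent_to_identityD[OF assms, of 1] by auto
  show thesis
  proof (rule that[OF r(1)])
    fix u :: complex assume "norm u < r"
    then show "norm (f u) \<le> 2 * norm u" using r(2)[of u] norm_triangle_ineq2[of "f u" u] by linarith
  qed
qed

lemma tangent_to_identity_diff_small:
  assumes "tangent_to_identity f" "tangent_to_identity g" "\<epsilon> > 0"
  shows "\<exists>\<delta>>0. \<forall>u. norm u < \<delta> \<longrightarrow> norm (f u - g u) \<le> \<epsilon> * norm u"
proof -
  obtain \<delta>1 \<delta>2 where \<delta>: "\<delta>1 > 0" "\<delta>2 > 0"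
    "\<And>u. norm u < \<delta>1 \<Longrightarrow> norm (f u - u) \<le> \<epsilon> / 2 * norm u"
    "\<And>u. norm u < \<delta>2 \<Longrightarrow> norm (g u - u) \<le> \<epsilon> / 2 * norm u"
    using assms(1,2)[THEN tangent_to_identityD, of "\<epsilon> / 2"] assms(3) by auto
  have "norm (f u - g u) \<le> \<epsilon> * norm u" if "norm u < min \<delta>1 \<delta>2" for u
    using \<delta>(3,4)[of u] that norm_triangle_ineq4[of "f u - u" "g u - u"]
    by (simp add: norm_minus_commute)
  then show ?thesis using \<delta> by (intro exI[of _ "min \<delta>1 \<delta>2"]) auto
qed

text \<open>The pullback of a nonnegative function along \<open>z \<mapsto> \<lambda> z\<close> grows at most by factors
  \<open>\<lambda> (1 + K |z|/\<lambda>\<^sup>k)\<close> whose product converges; a function that is \<open>o(|z|)\<close> at \<open>0\<close> is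
  thereby forced to vanish.\<close>

lemma expansion_iterate_bound:
  fixes g :: "complex \<Rightarrow> real"
  assumes lam: "lam > 1" and K: "K \<ge> 0" and g0: "\<And>u. 0 \<le> g u"
    and step: "\<And>u. norm u < r \<Longrightarrow> g (of_real lam * u) \<le> lam * (1 + K * norm u) * g u"
    and z: "norm z < r"
  shows "g z \<le> lam ^ n * g (z / of_real (lam ^ n)) * exp (K * norm z / (lam - 1))"
proof -
  define x where "x n = z / of_real (lam ^ n)" for n
  define T where "T n = (1 - (1 / lam) ^ n) / (lam - 1)" for n
    \<comment> \<open>the geometric sum \<open>\<Sum>k=1..n. \<lambda>\<^sup>-\<^sup>k\<close>\<close>
  have norm_x: "norm (x n) = norm z / lam ^ n" for n
    unfolding x_def using lam by (simp add: norm_divide norm_power)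
  have "norm (x n) \<le> norm z" for n
    unfolding norm_x using lam by (simp add: divide_le_eq one_le_power mult_le_cancel_left1)
  then have x_r: "norm (x n) < r" for n using z by (meson le_less_trans)
  have x_Suc: "x n = of_real lam * x (Suc n)" for n unfolding x_def using lam by (simp add: field_simps)
  have iter: "g z \<le> lam ^ n * g (x n) * exp (K * norm z * T n)" for n
  proof (induction n)
    case (Suc n)
    have "g (x n) \<le> lam * (1 + K * norm (x (Suc n))) * g (x (Suc n))"
      using step[OF x_r] x_Suc by metis
    also have "\<dots> \<le> lam * exp (K * norm (x (Suc n))) * g (x (Suc n))"
      using lam g0 by (intro mult_right_mono mult_left_mono) (auto simp: exp_ge_add_one_self)
    finally have "lam ^ n * g (x n) * exp (K * norm z * T n)
        \<le> lam ^ n * (lam * exp (K * norm (x (Suc n))) * g (x (Suc n))) * exp (K * norm z * T n)"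
      using lam by (intro mult_right_mono mult_left_mono) auto
    also have "K * norm (x (Suc n)) + K * norm z * T n = K * norm z * T (Suc n)"
      unfolding norm_x T_def using lam by (simp add: field_simps)
    then have "lam ^ n * (lam * exp (K * norm (x (Suc n))) * g (x (Suc n))) * exp (K * norm z * T n)
        = lam ^ Suc n * g (x (Suc n)) * exp (K * norm z * T (Suc n))"
      by (simp add: exp_add[symmetric] algebra_simps)
    finally show ?case using Suc by linarith
  qed (simp add: x_def T_def)
  have "T n \<le> 1 / (lam - 1)" unfolding T_def using lam by (intro divide_right_mono) auto
  then have "K * norm z * T n \<le> K * norm z * (1 / (lam - 1))" using K by (intro mult_left_mono) auto
  then have "exp (K * norm z * T n) \<le> exp (K * norm z / (lam - 1))" by simp
  moreover have "0 \<le> lam ^ n * g (x n)" using lam g0 by simp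
  ultimately have "lam ^ n * g (x n) * exp (K * norm z * T n) \<le> lam ^ n * g (x n) * exp (K * norm z / (lam - 1))"
    by (rule mult_left_mono)
  then show ?thesis using iter[of n] by (simp add: x_def)
qed

lemma vanishes_if_expansion_controlled:
  fixes g :: "complex \<Rightarrow> real"
  assumes lam: "lam > 1" and K: "K \<ge> 0" and g0: "\<And>u. 0 \<le> g u"
    and step: "\<And>u. norm u < r \<Longrightarrow> g (of_real lam * u) \<le> lam * (1 + K * norm u) * g u"
    and small: "\<And>\<epsilon>. \<epsilon> > 0 \<Longrightarrow> \<exists>\<delta>>0. \<forall>u. norm u < \<delta> \<longrightarrow> g u \<le> \<epsilon> * norm u"
    and z: "norm z < r"
  shows "g z = 0"
proof -
  define M where "M = exp (K * norm z / (lam - 1))"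
  have "g z \<le> 0 + e" if "e > 0" for e
  proof -
    define \<epsilon> where "\<epsilon> = e / (norm z * M + 1)"
    have "norm z * M \<ge> 0" by (simp add: M_def)
    then have \<epsilon>: "\<epsilon> > 0" "\<epsilon> * (norm z * M) \<le> e" using \<open>e > 0\<close> by (auto simp: \<epsilon>_def field_simps)
    obtain \<delta> where \<delta>: "\<delta> > 0" "\<And>u. norm u < \<delta> \<Longrightarrow> g u \<le> \<epsilon> * norm u"
      using small[OF \<epsilon>(1)] by blast
    obtain n where "norm z / \<delta> < lam ^ n" using real_arch_pow[OF lam] by auto
    moreover have norm_zn: "norm (z / of_real (lam ^ n)) = norm z / lam ^ n"
      using lam by (simp add: norm_divide norm_power)
    ultimately have "norm (z / of_real (lam ^ n)) < \<delta>"
      using \<delta>(1) lam by (simp add: pos_divide_less_eq mult.commute)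
    then have "g (z / of_real (lam ^ n)) \<le> \<epsilon> * (norm z / lam ^ n)" using \<delta>(2) norm_zn by metis
    then have "lam ^ n * g (z / of_real (lam ^ n)) \<le> lam ^ n * (\<epsilon> * (norm z / lam ^ n))"
      using lam by (intro mult_left_mono) auto
    then have "lam ^ n * g (z / of_real (lam ^ n)) \<le> \<epsilon> * norm z" using lam by simp
    then have "lam ^ n * g (z / of_real (lam ^ n)) * M \<le> \<epsilon> * norm z * M"
      by (rule mult_right_mono) (simp add: M_def)
    moreover have "g z \<le> lam ^ n * g (z / of_real (lam ^ n)) * M"
      unfolding M_def by (rule expansion_iterate_bound[OF lam K g0 step z])
    ultimately have "g z \<le> \<epsilon> * norm z * M" by linarith
    then show ?thesis using \<epsilon>(2) by (simp add: mult.assoc)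
  qed
  then show ?thesis using field_le_epsilon[of "g z" 0] g0[of z] by simp
qed

lemma poly_linearizer_unique:
  fixes p :: "complex poly" and \<Phi> \<Psi> :: "complex \<Rightarrow> complex"
  assumes p: "coeff p 0 = 0" "coeff p 1 = of_real lam" "lam > 1"
    and eq: "\<And>z. \<Phi> (of_real lam * z) = poly p (\<Phi> z)" "\<And>z. \<Psi> (of_real lam * z) = poly p (\<Psi> z)"
    and tangent: "tangent_to_identity \<Phi>" "tangent_to_identity \<Psi>"
  shows "\<Phi> z = \<Psi> z"
proof -
  have "degree p \<ge> 1" using p(2,3) le_degree[of p 1] by fastforce
  then obtain K where K: "K \<ge> 0" "\<And>a b \<rho>. norm a \<le> \<rho> \<Longrightarrow> norm b \<le> \<rho> \<Longrightarrow> \<rho> \<le> 1 \<Longrightarrow>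
      norm (poly p a - poly p b - coeff p 1 * (a - b)) \<le> K * \<rho> * norm (a - b)"
    using poly_minus_linear_part_bound[OF p(1)] by blast
  obtain r1 where r1: "r1 > 0" "\<And>u. norm u < r1 \<Longrightarrow> norm (\<Phi> u) \<le> 2 * norm u"
    using tangent_to_identity_norm_le[OF tangent(1)] by blast
  obtain r2 where r2: "r2 > 0" "\<And>u. norm u < r2 \<Longrightarrow> norm (\<Psi> u) \<le> 2 * norm u"
    using tangent_to_identity_norm_le[OF tangent(2)] by blast
  define r where "r = min (min r1 r2) (1 / 2)"
  define g where "g u = norm (\<Phi> u - \<Psi> u)" for u
  have step: "g (of_real lam * u) \<le> lam * (1 + 2 * K / lam * norm u) * g u" if u: "norm u < r" for u
  proof -
    have "norm (poly p (\<Phi> u) - poly p (\<Psi> u) - of_real lam * (\<Phi> u - \<Psi> u)) \<le> K * (2 * norm u) * g u"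
      using K(2)[of "\<Phi> u" "2 * norm u" "\<Psi> u"] r1(2)[of u] r2(2)[of u] u p(2) by (simp add: g_def r_def)
    then have "g (of_real lam * u) \<le> lam * g u + K * (2 * norm u) * g u"
      using eq norm_triangle_ineq2[of "poly p (\<Phi> u) - poly p (\<Psi> u)" "of_real lam * (\<Phi> u - \<Psi> u)"] p(3)
      by (simp add: g_def norm_mult)
    also have "\<dots> = lam * (1 + 2 * K / lam * norm u) * g u" using p(3) by (simp add: field_simps)
    finally show ?thesis .
  qed
  have small: "\<exists>\<delta>>0. \<forall>u. norm u < \<delta> \<longrightarrow> g u \<le> \<epsilon> * norm u" if "\<epsilon> > 0" for \<epsilon>
    unfolding g_def using tangent that by (rule tangent_to_identity_diff_small)
  have near_0: "\<Phi> u = \<Psi> u" if "norm u < r" for u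
    using vanishes_if_expansion_controlled[OF p(3) _ _ step small that] K(1) p(3) by (simp add: g_def)
  have "r > 0" using r1(1) r2(1) by (simp add: r_def)
  obtain n where n: "norm z / r < lam ^ n" using real_arch_pow[OF p(3)] by auto
  have "norm (z / of_real (lam ^ n)) < r"
    using n \<open>r > 0\<close> p(3) by (simp add: norm_divide norm_power field_simps)
  moreover have "z = of_real lam ^ n * (z / of_real (lam ^ n))" using p(3) by simp
  ultimately show ?thesis
    using near_0 funpow_semiconj[of \<Phi>, OF eq(1)] funpow_semiconj[of \<Psi>, OF eq(2)] by metis
qed

section \<open>The Poincare function\<close>

lemma abs_Arg_exp_le: "\<bar>Arg (exp z)\<bar> \<le> \<bar>Im z\<bar>"
proof (cases "- pi < Im z \<and> Im z \<le> pi")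
  case True then show ?thesis by (simp add: Arg_exp)
next
  case False then show ?thesis using Arg_bounded[of "exp z"] by auto
qed

lemma abs_Arg_mult_le:
  assumes "u \<noteq> 0" "v \<noteq> 0"
  shows "\<bar>Arg (u * v)\<bar> \<le> \<bar>Arg u\<bar> + \<bar>Arg v\<bar>"
proof (cases "Arg u + Arg v \<in> {- pi<..pi}")
  case True then show ?thesis using Arg_times[OF True assms] by simp
next
  case False then show ?thesis using Arg_bounded[of "u * v"] by auto
qed

lemma continuous_log_of_1_eq_0:
  fixes f :: "'a::topological_space \<Rightarrow> complex"
  assumes "connected S" "continuous_on S f" "\<And>x. x \<in> S \<Longrightarrow> exp (f x) = 1"
    and "x0 \<in> S" "f x0 = 0" "x \<in> S"
  shows "f x = 0"
proof -
  have "f constant_on S"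
  proof (rule continuous_discrete_range_constant[OF assms(1,2)])
    fix x assume x: "x \<in> S"
    have "2 * pi \<le> norm (f y - f x)" if y: "y \<in> S" "f y \<noteq> f x" for y
    proof -
      have "exp (f y - f x) = 1" using assms(3) x y(1) by (simp add: exp_diff)
      then obtain n :: int where n: "Re (f y - f x) = 0" "Im (f y - f x) = of_int (2 * n) * pi"
        using exp_eq_1 by blast
      then have "n \<noteq> 0" using y(2) by (auto simp: complex_eq_iff)
      then have "2 * pi * 1 \<le> 2 * pi * \<bar>real_of_int n\<bar>" by (intro mult_left_mono) auto
      also have "\<dots> = \<bar>Im (f y - f x)\<bar>" using n(2) by (simp add: abs_mult)
      also have "\<dots> \<le> norm (f y - f x)" by (rule abs_Im_le_cmod)
      finally show ?thesis by simp
    qed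
    then show "\<exists>e>0. \<forall>y. y \<in> S \<and> f y \<noteq> f x \<longrightarrow> e \<le> norm (f y - f x)"
      by (intro exI[of _ "2 * pi"]) auto
  qed
  then show ?thesis using assms(4-6) unfolding constant_on_def by metis
qed

lemma real_poly_positive_fixed_point:
  fixes q :: "real poly"
  assumes "poly q 0 = 0" "coeff q 1 > 1" "lead_coeff q < 0"
  obtains x where "x > 0" "poly q x = x"
proof -
  define f where "f t = poly q t - t" for t
  have "DERIV f 0 :> coeff q 1 - 1"
    unfolding f_def by (auto intro!: derivative_eq_intros simp: poly_0_coeff_0 coeff_pderiv)
  then obtain \<delta> where \<delta>: "\<delta> > 0" "\<And>h. 0 < h \<Longrightarrow> h < \<delta> \<Longrightarrow> f 0 < f h"
    using DERIV_pos_inc_right assms(2) by force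
  have "f 0 < f (\<delta> / 2)" using \<delta> by simp
  then have f1: "0 \<le> f (\<delta> / 2)" using assms(1) by (simp add: f_def)
  obtain n where n: "\<And>x. n \<le> x \<Longrightarrow> - lead_coeff q \<le> poly (- q) x"
    using poly_pinfty_gt_lc[of "- q"] assms(3) by (auto simp: lead_coeff_minus)
  define t where "t = max n (\<delta> / 2)"
  have "f t \<le> 0" using n[of t] assms(3) \<delta>(1) by (simp add: f_def t_def)
  moreover have "continuous_on {\<delta> / 2..t} f" unfolding f_def by (intro continuous_intros)
  ultimately obtain x where "\<delta> / 2 \<le> x" "f x = 0"
    using IVT2'[of f t 0 "\<delta> / 2"] f1 by (auto simp: t_def)
  then show ?thesis using that[of x] \<delta>(1) by (simp add: f_def)
qed

locale poincare_function =
  fixes p :: "complex poly" and d :: nat and lam \<beta> :: real and \<Phi> :: "complex \<Rightarrow> complex"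
  assumes real_coeffs: "\<forall>i. coeff p i \<in> \<real>"
    and deg: "degree p = d" and d2: "d \<ge> 2"
    and p0: "coeff p 0 = 0"
    and p1: "coeff p 1 = of_real lam" and lam1: "lam > 1"
    and beta: "\<beta> > 0" and sector_fatou: "angular_region \<beta> \<subseteq> fatou_inf p"
    and Phi_hol0: "\<exists>r>0. \<Phi> holomorphic_on ball 0 r"
    and Phi_eq: "\<forall>z. \<Phi> (of_real lam * z) = poly p (\<Phi> z)"
    and Phi0: "\<Phi> 0 = 0"
    and Phi'0: "(\<Phi> has_field_derivative 1) (at 0)"
begin

lemma Phi_funpow: "\<Phi> (of_real lam ^ n * z) = (poly p ^^ n) (\<Phi> z)"
  using funpow_semiconj[of \<Phi>] Phi_eq by blast

lemma Phi_holomorphic: "\<Phi> holomorphic_on S"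
proof (rule holomorphic_on_balls_imp_entire'[of _ 0])
  fix r' :: real assume "r' > 0"
  obtain r where r: "r > 0" "\<Phi> holomorphic_on ball 0 r" using Phi_hol0 by auto
  obtain n where n: "r' / r < lam ^ n" using real_arch_pow[OF lam1] by auto
  define c where "c = (of_real (lam ^ n) :: complex)"
  have c: "norm c = lam ^ n" "c \<noteq> 0" using lam1 by (auto simp: c_def norm_power)
  have "(\<lambda>z. z / c) ` ball 0 (r * lam ^ n) \<subseteq> ball 0 r"
    using c lam1 by (auto simp: norm_divide field_simps)
  moreover have "(\<lambda>z. z / c) holomorphic_on ball 0 (r * lam ^ n)"
    using c(2) by (intro holomorphic_intros)
  ultimately have "(\<Phi> \<circ> (\<lambda>z. z / c)) holomorphic_on ball 0 (r * lam ^ n)"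
    using holomorphic_on_compose_gen[OF _ r(2)] by blast
  then have "((poly p ^^ n) \<circ> (\<Phi> \<circ> (\<lambda>z. z / c))) holomorphic_on ball 0 (r * lam ^ n)"
    by (rule holomorphic_on_compose[OF _ holomorphic_on_funpow_poly])
  then have "(\<lambda>z. (poly p ^^ n) (\<Phi> (z / c))) holomorphic_on ball 0 (r * lam ^ n)"
    by (simp add: o_def)
  moreover have "(poly p ^^ n) (\<Phi> (z / c)) = \<Phi> z" for z
    using Phi_funpow[of n "z / c"] c(2) lam1 by (simp add: c_def)
  moreover have "r' < r * lam ^ n" using n r by (simp add: field_simps)
  ultimately show "\<Phi> holomorphic_on ball 0 r'"
    by (metis (no_types, lifting) ball_subset_cball holomorphic_on_subset holomorphic_transform
        less_imp_le mem_ball_0 subset_ball subset_iff)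
qed

lemma Phi_tangent: "tangent_to_identity \<Phi>"
  using Phi0 Phi'0 by (rule has_field_derivative_1_imp_tangent_to_identity)

lemma Phi_cnj: "\<Phi> (cnj z) = cnj (\<Phi> z)"
proof -
  have "cnj (\<Phi> (cnj (of_real lam * z))) = poly p (cnj (\<Phi> (cnj z)))" for z
    using Phi_eq poly_cnj_real[of p] real_coeffs by simp
  then have "\<Phi> w = cnj (\<Phi> (cnj w))" for w
    using poly_linearizer_unique[OF p0 p1 lam1, of \<Phi> "\<lambda>z. cnj (\<Phi> (cnj z))"] Phi_eq
      Phi_tangent tangent_to_identity_cnj[OF Phi_tangent] by blast
  then show ?thesis by (metis complex_cnj_cnj)
qed

lemma Phi_real: "\<Phi> (of_real x) \<in> \<real>"
  using Phi_cnj[of "of_real x"] Reals_cnj_iff by force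

lemma lead_coeff_real: "lead_coeff p = of_real (Re (lead_coeff p))"
  using real_coeffs by (metis Re_complex_of_real Reals_cases)

text \<open>If the leading coefficient were negative, the real polynomial would have a positive fixed
  point, which lies in the sector and yet cannot escape.\<close>

lemma lead_coeff_pos: "Re (lead_coeff p) > 0"
proof (rule ccontr)
  define q where "q = map_poly Re p"
  have p_q: "p = map_poly of_real q"
    using real_coeffs by (intro poly_eqI) (simp add: q_def coeff_map_poly complex_is_Real_iff complex_eq_iff)
  have poly_q: "poly p (of_real x) = of_real (poly q x)" for x
    unfolding p_q by (induction q) (auto simp: map_poly_pCons)
  have "degree q = d" using deg unfolding p_q by (simp add: degree_map_poly)
  then have coeffs_q: "poly q 0 = 0" "coeff q 1 = lam" "lead_coeff q = Re (lead_coeff p)"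
    using p0 p1 by (simp_all add: q_def coeff_map_poly poly_0_coeff_0 deg)
  assume "\<not> Re (lead_coeff p) > 0"
  moreover have "lead_coeff p \<noteq> 0" using deg d2 by auto
  ultimately have "lead_coeff q < 0"
    using lead_coeff_real coeffs_q(3) by (metis linorder_neqE_linordered_idom of_real_0)
  then obtain x where x: "x > 0" "poly q x = x"
    using real_poly_positive_fixed_point[of q] coeffs_q lam1 by auto
  then have "of_real x \<in> fatou_inf p"
    using sector_fatou beta by (auto simp: angular_region_def)
  moreover have "poly p (of_real x) = of_real x" using x poly_q by simp
  ultimately show False using fixed_point_notin_fatou_inf deg d2 by blast
qed

definition psi :: "complex \<Rightarrow> complex" where
  "psi w = \<Phi> (exp (w * of_real (ln lam)))"

definition strip :: "complex set" where
  "strip = {w. \<bar>Im w\<bar> < \<beta> / ln lam}"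

definition lead_root :: real where
  "lead_root = root (d - 1) (Re (lead_coeff p))"

lemma ln_lam_pos: "ln lam > 0"
  using lam1 by simp

lemma psi_add_nat: "psi (w + of_nat n) = (poly p ^^ n) (psi w)"
proof -
  have "exp ((w + of_nat n) * of_real (ln lam)) = exp (of_nat n * of_real (ln lam)) * exp (w * of_real (ln lam))"
    by (simp add: distrib_right exp_add)
  also have "exp (of_nat n * of_real (ln lam)) = (of_real lam ^ n :: complex)"
    using lam1 by (simp add: exp_of_nat_mult exp_of_real)
  finally show ?thesis unfolding psi_def by (simp add: Phi_funpow)
qed

lemma psi_add_1: "psi (w + 1) = poly p (psi w)"
  using psi_add_nat[of w 1] by simp

lemma psi_holomorphic: "psi holomorphic_on S"
proof -
  have "(\<Phi> \<circ> (\<lambda>w. exp (w * of_real (ln lam)))) holomorphic_on S"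
    by (intro holomorphic_on_compose holomorphic_intros Phi_holomorphic)
  then show ?thesis by (simp add: psi_def[abs_def] o_def)
qed

lemma psi_cnj: "psi (cnj w) = cnj (psi w)"
proof -
  have "exp (cnj w * of_real (ln lam)) = cnj (exp (w * of_real (ln lam)))" by (simp add: exp_cnj)
  then show ?thesis by (simp add: psi_def Phi_cnj)
qed

lemma convex_strip: "convex strip"
proof -
  have "strip = {w. Im w < \<beta> / ln lam} \<inter> {w. Im w > - (\<beta> / ln lam)}"
    by (auto simp: strip_def)
  then show ?thesis by (simp add: convex_Int convex_halfspace_Im_lt convex_halfspace_Im_gt)
qed

lemma strip_add_nat: "w \<in> strip \<Longrightarrow> w + of_nat n \<in> strip"
  and strip_add_1: "w \<in> strip \<Longrightarrow> w + 1 \<in> strip"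
  and of_real_in_strip: "of_real x \<in> strip"
  and cnj_in_strip: "w \<in> strip \<Longrightarrow> cnj w \<in> strip"
  using beta ln_lam_pos by (auto simp: strip_def)

lemma strip_narrower:
  assumes "w \<in> strip"
  obtains \<eta> where "0 < \<eta>" "\<eta> < \<beta>" "\<bar>Im w\<bar> < \<eta> / ln lam"
proof
  have "\<bar>Im w\<bar> * ln lam < \<beta>" using assms ln_lam_pos by (simp add: strip_def field_simps)
  then show "0 < (\<bar>Im w\<bar> * ln lam + \<beta>) / 2" "(\<bar>Im w\<bar> * ln lam + \<beta>) / 2 < \<beta>"
    "\<bar>Im w\<bar> < (\<bar>Im w\<bar> * ln lam + \<beta>) / 2 / ln lam"
    using beta ln_lam_pos by (auto simp: field_simps add_pos_nonneg)
qed

lemma lead_root_pos: "lead_root > 0"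
  using lead_coeff_pos d2 by (simp add: lead_root_def)

lemma lead_root_power: "(of_real lead_root :: complex) ^ d = of_real lead_root * lead_coeff p"
proof -
  have "lead_root ^ (d - 1) = Re (lead_coeff p)"
    using lead_coeff_pos d2 by (simp add: lead_root_def real_root_pow_pos2)
  then have "(of_real lead_root :: complex) ^ (d - 1) = lead_coeff p"
    using lead_coeff_real by (metis of_real_power)
  moreover have "d = Suc (d - 1)" using d2 by simp
  ultimately show ?thesis by (metis power_Suc)
qed

lemma Phi_maps_small_sector:
  assumes "0 < \<eta>" "\<eta> < \<beta>"
  obtains \<delta> where "\<delta> > 0"
    "\<And>u. u \<noteq> 0 \<Longrightarrow> norm u < \<delta> \<Longrightarrow> \<bar>Arg u\<bar> \<le> \<eta> \<Longrightarrow> \<Phi> u \<in> angular_region \<beta>"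
proof -
  have "isCont Arg 1" by (rule continuous_at_Arg) auto
  then obtain e where e: "e > 0" "\<And>q. dist q 1 < e \<Longrightarrow> dist (Arg q) (Arg 1) < \<beta> - \<eta>"
    using assms unfolding continuous_at_eps_delta by (metis diff_gt_0_iff_gt)
  obtain \<delta> where \<delta>: "\<delta> > 0" "\<And>u. norm u < \<delta> \<Longrightarrow> norm (\<Phi> u - u) \<le> min (e / 2) (1 / 2) * norm u"
    using tangent_to_identityD[OF Phi_tangent, of "min (e / 2) (1 / 2)"] e(1) by auto
  show thesis
  proof (rule that[OF \<delta>(1)])
    fix u assume u: "u \<noteq> 0" "norm u < \<delta>" "\<bar>Arg u\<bar> \<le> \<eta>"
    define q where "q = \<Phi> u / u"
    have "\<Phi> u - u = u * (q - 1)" using u by (simp add: q_def field_simps)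
    then have "norm (q - 1) \<le> min (e / 2) (1 / 2)"
      using \<delta>(2)[OF u(2)] u(1) by (simp add: norm_mult)
    then have "\<bar>Arg q\<bar> < \<beta> - \<eta>" "q \<noteq> 0" using e by (auto simp: dist_norm dist_real_def)
    moreover have "\<Phi> u = u * q" using u by (simp add: q_def)
    ultimately show "\<Phi> u \<in> angular_region \<beta>"
      using abs_Arg_mult_le[OF u(1), of q] u by (auto simp: angular_region_def)
  qed
qed

text \<open>Far to the left, the strip is mapped by \<^const>\<open>psi\<close> into the part of the sector where
  \<open>\<Phi>\<close> is close to the identity, hence into \<^const>\<open>fatou_inf\<close>; a compact piece of it escapes
  uniformly, and translating by integers carries the estimate to the right half-strip.\<close>

lemma psi_escapes_on_half_strip:
  assumes R: "escape_radius p R" and \<eta>: "0 < \<eta>" "\<eta> < \<beta>"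
  obtains N where "\<And>w. \<bar>Im w\<bar> \<le> \<eta> / ln lam \<Longrightarrow> N \<le> Re w \<Longrightarrow> R < norm (psi w)"
proof -
  obtain \<delta> where \<delta>: "\<delta> > 0"
    "\<And>u. u \<noteq> 0 \<Longrightarrow> norm u < \<delta> \<Longrightarrow> \<bar>Arg u\<bar> \<le> \<eta> \<Longrightarrow> \<Phi> u \<in> angular_region \<beta>"
    using Phi_maps_small_sector[OF \<eta>] by blast
  obtain T :: nat where T: "1 / \<delta> < lam ^ T" using real_arch_pow[OF lam1] by auto
  define K where "K = cbox (Complex (- real T - 1) (- \<eta> / ln lam)) (Complex (- real T) (\<eta> / ln lam))"
  have "psi ` K \<subseteq> fatou_inf p"
  proof (rule image_subsetI)
    fix w assume "w \<in> K"
    then have w: "Re w \<le> - real T" "\<bar>Im w\<bar> \<le> \<eta> / ln lam" by (auto simp: K_def in_cbox_complex_iff)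
    define u where "u = exp (w * of_real (ln lam))"
    have "norm u = exp (Re w * ln lam)" by (simp add: u_def)
    also have "\<dots> \<le> exp (- real T * ln lam)" using mult_right_mono[OF w(1), of "ln lam"] ln_lam_pos by simp
    also have "\<dots> = 1 / lam ^ T" using lam1 by (simp add: exp_minus exp_of_nat_mult divide_inverse)
    also have "\<dots> < \<delta>" using T \<delta>(1) lam1 by (simp add: field_simps)
    finally have "norm u < \<delta>" .
    moreover have "\<bar>Arg u\<bar> \<le> \<eta>"
      using abs_Arg_exp_le[of "w * of_real (ln lam)"] w(2) ln_lam_pos
      by (simp add: u_def abs_mult field_simps)
    ultimately have "\<Phi> u \<in> angular_region \<beta>" using \<delta>(2) by (simp add: u_def)
    then show "psi w \<in> fatou_inf p" using sector_fatou by (auto simp: psi_def u_def)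
  qed
  moreover have "compact (psi ` K)" unfolding K_def
    by (intro compact_continuous_image holomorphic_on_imp_continuous_on psi_holomorphic compact_cbox)
  ultimately obtain N0 where N0: "\<And>n x. N0 \<le> n \<Longrightarrow> x \<in> psi ` K \<Longrightarrow> R < norm ((poly p ^^ n) x)"
    using fatou_inf_escapes_uniformly[OF R] by blast
  show thesis
  proof (rule that[of "real N0 - real T"])
    fix w assume w: "\<bar>Im w\<bar> \<le> \<eta> / ln lam" "real N0 - real T \<le> Re w"
    define n where "n = nat \<lceil>Re w + real T\<rceil>"
    have "real n = of_int \<lceil>Re w + real T\<rceil>" using w(2) by (simp add: n_def)
    then have n: "Re w + real T \<le> real n" "real n < Re w + real T + 1" by linarith+
    then have "w - of_nat n \<in> K" "N0 \<le> n" using w by (auto simp: K_def in_cbox_complex_iff)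
    moreover have "psi w = (poly p ^^ n) (psi (w - of_nat n))" using psi_add_nat[of "w - of_nat n" n] by simp
    ultimately show "R < norm (psi w)" using N0 by auto
  qed
qed

lemma psi_nonzero:
  assumes "w \<in> strip"
  shows "psi w \<noteq> 0"
proof
  assume psi_0: "psi w = 0"
  obtain R where R: "escape_radius p R" using escape_radius_exists deg d2 by auto
  obtain \<eta> where \<eta>: "0 < \<eta>" "\<eta> < \<beta>" "\<bar>Im w\<bar> < \<eta> / ln lam" using strip_narrower[OF assms] .
  obtain N where N: "\<And>w. \<bar>Im w\<bar> \<le> \<eta> / ln lam \<Longrightarrow> N \<le> Re w \<Longrightarrow> R < norm (psi w)"
    using psi_escapes_on_half_strip[OF R \<eta>(1,2)] by blast
  define n where "n = nat \<lceil>N - Re w\<rceil>"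
  have "R < norm (psi (w + of_nat n))"
    using \<eta>(3) real_nat_ceiling_ge[of "N - Re w"] by (intro N) (auto simp: n_def)
  moreover have "(poly p ^^ n) 0 = 0" for n by (induction n) (simp_all add: poly_0_coeff_0 p0)
  ultimately show False using psi_0 psi_add_nat escape_radiusD(1)[OF R] by simp
qed

lemma psi_positive_somewhere:
  obtains x c where "c > 0" "psi (of_real x) = of_real c"
proof -
  obtain \<delta> where \<delta>: "\<delta> > 0" "\<And>u. norm u < \<delta> \<Longrightarrow> norm (\<Phi> u - u) \<le> 1 / 2 * norm u"
    using tangent_to_identityD[OF Phi_tangent, of "1 / 2"] by auto
  define t where "t = \<delta> / 2"
  have "t - Re (\<Phi> (of_real t)) \<le> norm (\<Phi> (of_real t) - of_real t)"
    using abs_Re_le_cmod[of "\<Phi> (of_real t) - of_real t"] by simp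
  also have "\<dots> \<le> t / 2" using \<delta>(2)[of "of_real t"] \<delta>(1) by (simp add: t_def)
  finally have pos: "Re (\<Phi> (of_real t)) > 0" using \<delta>(1) by (simp add: t_def)
  have "psi (of_real (ln t / ln lam)) = \<Phi> (of_real t)"
    using \<delta>(1) ln_lam_pos by (simp add: psi_def t_def exp_of_real)
  moreover have "\<Phi> (of_real t) = of_real (Re (\<Phi> (of_real t)))"
    using Phi_real by (simp add: complex_eq_iff complex_is_Real_iff)
  ultimately show thesis using that pos by metis
qed

text \<open>A holomorphic logarithm on the simply connected strip, with the branch fixed at a real
  point where the logarithm is real; the reflection \<open>cnj \<circ> L \<circ> cnj\<close> is another logarithm
  agreeing there, hence everywhere.\<close>

lemma strip_log_exists:
  obtains L where "L holomorphic_on strip" "\<And>w. w \<in> strip \<Longrightarrow> exp (L w) = of_real lead_root * psi w"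
    "\<And>x. L (of_real x) \<in> \<real>"
proof -
  have "(\<lambda>w. of_real lead_root * psi w) holomorphic_on strip" by (intro holomorphic_intros psi_holomorphic)
  moreover have "\<And>w. w \<in> strip \<Longrightarrow> of_real lead_root * psi w \<noteq> 0" using psi_nonzero lead_root_pos by simp
  ultimately obtain g where g: "g holomorphic_on strip" "\<And>w. w \<in> strip \<Longrightarrow> of_real lead_root * psi w = exp (g w)"
    using contractible_imp_holomorphic_log[OF _ convex_imp_contractible[OF convex_strip]] by blast
  obtain x0 c where c: "c > 0" "psi (of_real x0) = of_real c" using psi_positive_somewhere .
  define L where "L w = g w - g (of_real x0) + of_real (ln (lead_root * c))" for w
  have L_holo: "L holomorphic_on strip" unfolding L_def by (intro holomorphic_intros g(1))
  have "exp (g (of_real x0)) = of_real (lead_root * c)"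
    using g(2)[OF of_real_in_strip, of x0] c by simp
  then have L_exp: "exp (L w) = of_real lead_root * psi w" if "w \<in> strip" for w
    using g(2)[OF that] c lead_root_pos by (simp add: L_def exp_add exp_diff exp_of_real)
  define f where "f w = cnj (L (cnj w)) - L w" for w
  have "continuous_on strip (\<lambda>w. L (cnj w))"
    using holomorphic_on_imp_continuous_on[OF L_holo]
    by (rule continuous_on_compose2) (auto intro!: continuous_intros simp: cnj_in_strip)
  then have "continuous_on strip f"
    unfolding f_def by (intro continuous_intros holomorphic_on_imp_continuous_on[OF L_holo])
  moreover have "exp (f w) = 1" if "w \<in> strip" for w
  proof -
    have "exp (cnj (L (cnj w))) = exp (L w)"
      using L_exp[OF that] L_exp[OF cnj_in_strip[OF that]] psi_cnj[of "cnj w"] by (simp flip: exp_cnj)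
    then show ?thesis by (simp add: f_def exp_diff)
  qed
  moreover have "f (of_real x0) = 0" by (simp add: f_def L_def)
  ultimately have "f (of_real x) = 0" for x
    using continuous_log_of_1_eq_0[OF convex_connected[OF convex_strip]] of_real_in_strip by blast
  then have "L (of_real x) \<in> \<real>" for x by (simp add: f_def Reals_cnj_iff)
  then show thesis using that L_holo L_exp by blast
qed

lemma radius_constants_exist:
  obtains R C where "escape_radius p R" "C > 0"
    "\<And>u. R \<le> norm u \<Longrightarrow> norm (poly p u / (lead_coeff p * u ^ d) - 1) \<le> C / norm u"
    "8 * C \<le> R" "2 \<le> ln (lead_root * R)"
proof -
  obtain R0 where R0: "escape_radius p R0" using escape_radius_exists deg d2 by auto
  have "p \<noteq> 0" using deg d2 by auto
  then obtain C where C: "C > 0"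
    "\<And>u. 1 \<le> norm u \<Longrightarrow> norm (poly p u / (lead_coeff p * u ^ d) - 1) \<le> C / norm u"
    using poly_over_lead_monom_bound[OF deg] by blast
  define R where "R = max (max R0 1) (max (8 * C) (exp 2 / lead_root))"
  have R: "R0 \<le> R" "1 \<le> R" "8 * C \<le> R" "exp 2 / lead_root \<le> R" unfolding R_def by auto
  have "exp 2 \<le> lead_root * R" using R(4) lead_root_pos by (simp add: field_simps)
  then have "2 \<le> ln (lead_root * R)"
    using ln_le_cancel_iff[of "exp 2" "lead_root * R"] lead_root_pos R(2) by simp
  moreover have "norm (poly p u / (lead_coeff p * u ^ d) - 1) \<le> C / norm u" if "R \<le> norm u" for u
    using C(2) R(2) that by simp
  ultimately show thesis using that escape_radius_mono[OF R0 R(1)] C(1) R(3) by blast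
qed

end

section \<open>The Boettcher coordinate along the strip\<close>

lemma
  assumes "lam > 1" "z \<noteq> 0"
  shows Im_log_base_c: "Im (log_base_c lam z) = Arg z / ln lam"
    and Re_log_base_c: "Re (log_base_c lam z) = ln (norm z) / ln lam"
    and exp_log_base_c: "exp (log_base_c lam z * of_real (ln lam)) = z"
    and powr_eq_exp_log_base_c: "z powr of_real (a / ln lam) = exp (log_base_c lam z * of_real a)"
  using assms by (simp_all add: log_base_c_def Arg_eq_Im_Ln powr_def field_simps)

lemma pow_beats_linear:
  fixes x a b :: real
  assumes "x \<ge> 2"
  obtains n1 where "\<And>n. n1 \<le> n \<Longrightarrow> a + b * real n \<le> x ^ n"
proof -
  obtain n2 where n2: "\<bar>b\<bar> + 1 < x ^ n2" using real_arch_pow[of x "\<bar>b\<bar> + 1"] assms by auto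
  define c where "c = x ^ n2 - b * real n2"
  have grow: "c + real k \<le> x ^ (n2 + k) - b * real (n2 + k)" for k
  proof (induction k)
    case (Suc k)
    have "x ^ n2 \<le> x ^ (n2 + k)" using assms by (intro power_increasing) auto
    moreover have "2 * x ^ (n2 + k) \<le> x * x ^ (n2 + k)" using assms by (intro mult_right_mono) auto
    ultimately have "x ^ (n2 + k) + (\<bar>b\<bar> + 1) \<le> x ^ (n2 + Suc k)" using n2 by simp
    then show ?case using Suc by (simp add: algebra_simps)
  qed (simp add: c_def)
  show thesis
  proof (rule that)
    fix n assume n: "n2 + nat \<lceil>a - c\<rceil> \<le> n"
    then have "a - c \<le> real (n - n2)" by linarith
    then show "a + b * real n \<le> x ^ n" using grow[of "n - n2"] n by simp
  qed
qed

lemma Cauchy_if_geometric_tail: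
  fixes X :: "nat \<Rightarrow> 'a::real_normed_vector"
  assumes "x > 1" "\<And>m n. m \<le> n \<Longrightarrow> norm (X n - X m) \<le> E / x ^ m"
  shows "Cauchy X"
proof (rule CauchyI)
  fix e :: real assume "e > 0"
  have "(\<lambda>m. 2 * E / x ^ m) \<longlonglongrightarrow> 0" by (rule LIMSEQ_divide_realpow_zero[OF assms(1)])
  then obtain M where M: "2 * E / x ^ M < e"
    using order_tendstoD(2)[OF _ \<open>e > 0\<close>] by (metis eventually_sequentially order_refl)
  have "norm (X m - X n) < e" if "M \<le> m" "M \<le> n" for m n
  proof -
    have "norm (X m - X n) \<le> norm (X m - X M) + norm (X n - X M)"
      using norm_triangle_ineq4[of "X m - X M" "X n - X M"] by simp
    also have "\<dots> \<le> E / x ^ M + E / x ^ M" using assms(2) that by (intro add_mono)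
    finally show ?thesis using M by simp
  qed
  then show "\<exists>M. \<forall>m\<ge>M. \<forall>n\<ge>M. norm (X m - X n) < e" by blast
qed

text \<open>The conditions on \<open>R\<close> and \<open>C\<close> make \<open>log_ratio\<close> the principal logarithm of a
  number within \<open>1/8\<close> of \<open>1\<close>, and give \<open>Re L \<ge> 2\<close> wherever \<open>|psi| > R\<close>.\<close>

locale poincare_log = poincare_function +
  fixes R C :: real and L :: "complex \<Rightarrow> complex"
  assumes escape_R: "escape_radius p R" and C: "C > 0"
    and lead_monom_approx: "\<And>u. R \<le> norm u \<Longrightarrow> norm (poly p u / (lead_coeff p * u ^ d) - 1) \<le> C / norm u"
    and R_ge_8C: "8 * C \<le> R" and ln_lead_root_R_ge_2: "2 \<le> ln (lead_root * R)"
    and L_holomorphic: "L holomorphic_on strip"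
    and exp_L: "\<And>w. w \<in> strip \<Longrightarrow> exp (L w) = of_real lead_root * psi w"
    and L_real: "\<And>x. L (of_real x) \<in> \<real>"
begin

lemma R_pos: "R > 0"
  using escape_R by (rule escape_radiusD)

lemma d_gt_1: "real d > 1"
  using d2 by simp

definition log_ratio :: "complex \<Rightarrow> complex" where
  "log_ratio u = Ln (poly p u / (lead_coeff p * u ^ d))"

lemma lead_monom_ratio_close:
  assumes "R \<le> norm u"
  shows "norm (poly p u / (lead_coeff p * u ^ d) - 1) \<le> 1 / 8"
proof -
  have "C / norm u \<le> C / R" using assms C R_pos by (intro divide_left_mono mult_pos_pos) auto
  also have "\<dots> \<le> 1 / 8" using R_ge_8C R_pos by (simp add: field_simps)
  finally show ?thesis using lead_monom_approx[OF assms] by linarith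
qed

lemma
  assumes "R \<le> norm u"
  shows exp_log_ratio: "exp (log_ratio u) = poly p u / (lead_coeff p * u ^ d)"
    and norm_log_ratio_le: "norm (log_ratio u) \<le> 2 * C / norm u"
    and lead_monom_ratio_Re_pos: "Re (poly p u / (lead_coeff p * u ^ d)) > 0"
proof -
  define q where "q = poly p u / (lead_coeff p * u ^ d)"
  have q1: "norm (q - 1) \<le> 1 / 8" unfolding q_def by (rule lead_monom_ratio_close[OF assms])
  then show "Re (poly p u / (lead_coeff p * u ^ d)) > 0"
    using abs_Re_le_cmod[of "q - 1"] by (simp add: q_def)
  then have "poly p u / (lead_coeff p * u ^ d) \<noteq> 0" by (metis zero_complex.sel(1) less_irrefl)
  then show "exp (log_ratio u) = poly p u / (lead_coeff p * u ^ d)"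
    by (simp add: log_ratio_def)
  have "norm (Ln (1 + (q - 1))) \<le> 2 * norm (q - 1)" using q1 by (intro norm_Ln_le) auto
  also have "\<dots> \<le> 2 * C / norm u" using lead_monom_approx[OF assms] by (simp add: q_def)
  finally show "norm (log_ratio u) \<le> 2 * C / norm u" by (simp add: log_ratio_def q_def)
qed

lemma log_ratio_real:
  assumes "R \<le> t"
  shows "log_ratio (of_real t) \<in> \<real>"
proof -
  define q where "q = poly p (of_real t) / (lead_coeff p * of_real t ^ d)"
  have "poly p (of_real t) \<in> \<real>"
    using poly_cnj_real[of p "of_real t"] real_coeffs by (simp add: Reals_cnj_iff)
  then have "q = of_real (Re q)"
    using lead_coeff_real by (metis Reals_divide Reals_mult Reals_of_real Reals_power
        Re_complex_of_real Reals_cases q_def)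
  moreover have "Re q > 0" using lead_monom_ratio_Re_pos[of "of_real t"] assms R_pos by (simp add: q_def)
  ultimately show ?thesis by (metis Ln_of_real Reals_of_real log_ratio_def q_def)
qed

lemma psi_of_real_pos:
  obtains t where "t > 0" "psi (of_real x) = of_real t"
proof -
  obtain l where l: "L (of_real x) = of_real l" using L_real Reals_cases by blast
  have "of_real lead_root * psi (of_real x) = of_real (exp l)"
    using exp_L[OF of_real_in_strip, of x] by (simp add: l exp_of_real)
  then have "psi (of_real x) = of_real (exp l / lead_root)"
    using lead_root_pos by (simp add: field_simps)
  then show thesis using that[of "exp l / lead_root"] lead_root_pos by simp
qed

lemma continuous_on_log_ratio_psi:
  assumes "\<And>w. w \<in> H \<Longrightarrow> R \<le> norm (psi w)"
  shows "continuous_on H (\<lambda>w. log_ratio (psi w))"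
proof -
  have "psi w \<noteq> 0" if "w \<in> H" for w using assms[OF that] R_pos by auto
  moreover have "lead_coeff p \<noteq> 0" using deg d2 by auto
  ultimately have "continuous_on H (\<lambda>w. poly p (psi w) / (lead_coeff p * psi w ^ d))"
    by (intro continuous_intros holomorphic_on_imp_continuous_on[OF psi_holomorphic]) auto
  moreover have "poly p (psi w) / (lead_coeff p * psi w ^ d) \<notin> \<real>\<^sub>\<le>\<^sub>0" if "w \<in> H" for w
    using lead_monom_ratio_Re_pos[OF assms[OF that]] by (auto simp: complex_nonpos_Reals_iff)
  ultimately show ?thesis unfolding log_ratio_def by (intro continuous_on_Ln')
qed

lemma exp_L_add_1:
  assumes "w \<in> strip" "R \<le> norm (psi w)"
  shows "exp (L (w + 1)) = exp (of_nat d * L w + log_ratio (psi w))"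
proof -
  have "2 * norm (psi w) \<le> norm (poly p (psi w))"
    using escape_radiusD(2)[OF escape_R assms(2)] .
  then have "psi w \<noteq> 0" "poly p (psi w) \<noteq> 0" using assms(2) R_pos by auto
  moreover have "lead_coeff p \<noteq> 0" using deg d2 by auto
  ultimately have "exp (of_nat d * L w + log_ratio (psi w))
      = (of_real lead_root * psi w) ^ d * (poly p (psi w) / (lead_coeff p * psi w ^ d))"
    using exp_L[OF assms(1)] exp_log_ratio[OF assms(2)] by (simp add: exp_add exp_of_nat_mult)
  also have "\<dots> = of_real lead_root ^ d / lead_coeff p * poly p (psi w)"
    using \<open>psi w \<noteq> 0\<close> \<open>lead_coeff p \<noteq> 0\<close> by (simp add: field_simps power_mult_distrib)
  also have "\<dots> = exp (L (w + 1))"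
    using lead_root_power \<open>lead_coeff p \<noteq> 0\<close> exp_L[OF strip_add_1[OF assms(1)]] by (simp add: psi_add_1)
  finally show ?thesis ..
qed

text \<open>The defect of the recursion is a continuous logarithm of \<open>1\<close>, and it is real at real
  points.\<close>

lemma L_recursion:
  assumes H: "connected H" "H \<subseteq> strip" "\<And>w. w \<in> H \<Longrightarrow> R \<le> norm (psi w)" "of_real x0 \<in> H"
    and "w \<in> H"
  shows "L (w + 1) = of_nat d * L w + log_ratio (psi w)"
proof -
  define f where "f w = L (w + 1) - (of_nat d * L w + log_ratio (psi w))" for w
  have L_cont: "continuous_on strip L" using holomorphic_on_imp_continuous_on[OF L_holomorphic] .
  have "continuous_on H (\<lambda>w. L (w + 1))"
    using L_cont by (rule continuous_on_compose2) (use H(2) strip_add_1 in \<open>auto intro!: continuous_intros\<close>)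
  then have "continuous_on H f" unfolding f_def
    by (intro continuous_intros continuous_on_log_ratio_psi H(3) continuous_on_subset[OF L_cont H(2)])
  moreover have exp_f: "exp (f w) = 1" if "w \<in> H" for w
    using exp_L_add_1[of w] H(2,3) that by (auto simp: f_def exp_diff)
  moreover have "f (of_real x0) = 0"
  proof -
    obtain t where t: "t > 0" "psi (of_real x0) = of_real t" using psi_of_real_pos .
    then have "R \<le> t" using H(3)[OF H(4)] by simp
    then have "f (of_real x0) \<in> \<real>"
      using L_real[of x0] L_real[of "x0 + 1"] log_ratio_real t(2) by (simp add: f_def)
    then show ?thesis using exp_f[OF H(4)]
      by (metis Reals_cases exp_eq_one_iff exp_of_real of_real_0 of_real_1 of_real_eq_iff)
  qed
  ultimately have "f w = 0"
    using continuous_log_of_1_eq_0[OF H(1)] H(4) \<open>w \<in> H\<close> by blast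
  then show ?thesis by (simp add: f_def)
qed

definition tame :: "complex \<Rightarrow> bool" where
  "tame w \<longleftrightarrow> w \<in> strip \<and> (\<forall>k. R < norm (psi (w + of_nat k)) \<and>
      L (w + of_nat k + 1) = of_nat d * L (w + of_nat k) + log_ratio (psi (w + of_nat k)))"

lemma tame_half_strip:
  assumes \<eta>: "0 < \<eta>" "\<eta> < \<beta>"
  obtains N where "\<And>w. \<bar>Im w\<bar> < \<eta> / ln lam \<Longrightarrow> N < Re w \<Longrightarrow> tame w"
proof -
  obtain N where N: "\<And>w. \<bar>Im w\<bar> \<le> \<eta> / ln lam \<Longrightarrow> N \<le> Re w \<Longrightarrow> R < norm (psi w)"
    using psi_escapes_on_half_strip[OF escape_R \<eta>] by blast
  define H where "H = {w. Im w < \<eta> / ln lam} \<inter> {w. Im w > - (\<eta> / ln lam)} \<inter> {w. Re w > N}"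
  have H: "w \<in> H \<longleftrightarrow> \<bar>Im w\<bar> < \<eta> / ln lam \<and> N < Re w" for w unfolding H_def by auto
  have "convex H" unfolding H_def
    by (intro convex_Int convex_halfspace_Im_lt convex_halfspace_Im_gt convex_halfspace_Re_gt)
  moreover have "\<eta> / ln lam < \<beta> / ln lam" using \<eta> ln_lam_pos by (simp add: divide_strict_right_mono)
  then have "H \<subseteq> strip" by (auto simp: H strip_def)
  moreover have "R < norm (psi w)" if "w \<in> H" for w using that N by (auto simp: H)
  moreover have "of_real (N + 1) \<in> H" using \<eta> ln_lam_pos by (simp add: H)
  ultimately have rec: "L (w + 1) = of_nat d * L w + log_ratio (psi w)" if "w \<in> H" for w
    using L_recursion[OF convex_connected] that by (meson less_imp_le)
  show thesis
  proof (rule that)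
    fix w assume "\<bar>Im w\<bar> < \<eta> / ln lam" "N < Re w"
    then have "w + of_nat k \<in> H" for k by (auto simp: H)
    moreover from this[of 0] have "w \<in> strip" using \<open>H \<subseteq> strip\<close> by auto
    ultimately show "tame w" using rec \<open>H \<subseteq> strip\<close> \<open>\<And>w. w \<in> H \<Longrightarrow> R < norm (psi w)\<close>
      by (auto simp: tame_def)
  qed
qed

lemma tameD:
  assumes "tame w"
  shows "w \<in> strip" "R < norm (psi (w + of_nat k))"
    "L (w + of_nat k + 1) = of_nat d * L (w + of_nat k) + log_ratio (psi (w + of_nat k))"
  using assms by (auto simp: tame_def)

lemma tame_escaped: "tame w \<Longrightarrow> R < norm (psi w)"
  using tameD(2)[of w 0] by simp

lemma tame_add_nat:
  assumes "tame w"
  shows "tame (w + of_nat n)"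
  unfolding tame_def
proof (intro conjI allI)
  show "w + of_nat n \<in> strip" using tameD(1)[OF assms] by (rule strip_add_nat)
  fix k
  show "R < norm (psi (w + of_nat n + of_nat k))"
    "L (w + of_nat n + of_nat k + 1)
      = of_nat d * L (w + of_nat n + of_nat k) + log_ratio (psi (w + of_nat n + of_nat k))"
    using tameD(2,3)[OF assms, of "n + k"] by (simp_all add: add.assoc)
qed

lemma norm_psi_tame_le:
  assumes "tame w"
  shows "norm (psi w) \<le> norm (psi (w + of_nat k))"
proof -
  have "norm (psi w) \<le> 2 ^ k * norm (psi w)" by (simp add: mult_le_cancel_right1)
  also have "\<dots> \<le> norm (psi (w + of_nat k))"
    using escape_radius_funpow_growth[OF escape_R] tame_escaped[OF assms] by (simp add: psi_add_nat)
  finally show ?thesis .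
qed

definition rescaled_L :: "complex \<Rightarrow> nat \<Rightarrow> complex" where
  "rescaled_L w n = L (w + of_nat n) / of_nat d ^ n"

definition B :: "complex \<Rightarrow> complex" where
  "B w = lim (rescaled_L w)"

definition tame_error :: "complex \<Rightarrow> real" where
  "tame_error w = 2 * C / norm (psi w) / (real d - 1)"

lemma tame_error_le_norm_psi: "tame_error w \<le> 2 * C / norm (psi w)"
proof -
  have "1 \<le> real d - 1" using d2 by simp
  then have "2 * C / norm (psi w) / (real d - 1) \<le> 2 * C / norm (psi w) / 1"
    using C by (intro divide_left_mono) auto
  then show ?thesis by (simp add: tame_error_def)
qed

lemma tame_error_le:
  assumes "tame w"
  shows "tame_error w \<le> 2 * C / R"
proof -
  have "2 * C / norm (psi w) \<le> 2 * C / R"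
    using tame_escaped[OF assms] C R_pos by (intro divide_left_mono mult_pos_pos) auto
  then show ?thesis using tame_error_le_norm_psi[of w] by linarith
qed

lemma tame_error_le_1:
  assumes "tame w"
  shows "tame_error w \<le> 1"
proof -
  have "2 * C / R \<le> 1" using R_ge_8C R_pos by (simp add: divide_le_eq)
  then show ?thesis using tame_error_le[OF assms] by linarith
qed

lemma rescaled_L_step_le:
  assumes "tame w"
  shows "norm (rescaled_L w (Suc n) - rescaled_L w n) \<le> tame_error w * (1 / real d ^ n - 1 / real d ^ Suc n)"
proof -
  have "rescaled_L w (Suc n) - rescaled_L w n = log_ratio (psi (w + of_nat n)) / of_nat d ^ Suc n"
    using tameD(3)[OF assms, of n] d2 by (simp add: rescaled_L_def add.assoc field_simps)
  then have "norm (rescaled_L w (Suc n) - rescaled_L w n)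
      = norm (log_ratio (psi (w + of_nat n))) / real d ^ Suc n"
    by (simp add: norm_divide norm_power norm_mult)
  also have "\<dots> \<le> 2 * C / norm (psi w) / real d ^ Suc n"
  proof -
    have "norm (log_ratio (psi (w + of_nat n))) \<le> 2 * C / norm (psi (w + of_nat n))"
      using tameD(2)[OF assms] by (intro norm_log_ratio_le) (meson less_imp_le)
    also have "\<dots> \<le> 2 * C / norm (psi w)"
      using norm_psi_tame_le[OF assms, of n] tame_escaped[OF assms] C R_pos
      by (intro divide_left_mono mult_pos_pos) auto
    finally show ?thesis by (intro divide_right_mono) auto
  qed
  also have "\<dots> = tame_error w * ((real d - 1) / real d ^ Suc n)"
    using d_gt_1 by (simp add: tame_error_def)
  also have "(real d - 1) / real d ^ Suc n = 1 / real d ^ n - 1 / real d ^ Suc n"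
    using d2 by (simp add: field_simps)
  finally show ?thesis .
qed

lemma rescaled_L_diff_le:
  assumes "tame w" "m \<le> n"
  shows "norm (rescaled_L w n - rescaled_L w m) \<le> tame_error w * (1 / real d ^ m - 1 / real d ^ n)"
  using assms(2)
proof (induction n rule: dec_induct)
  case (step n)
  have "norm (rescaled_L w (Suc n) - rescaled_L w m)
      \<le> norm (rescaled_L w (Suc n) - rescaled_L w n) + norm (rescaled_L w n - rescaled_L w m)"
    using norm_triangle_ineq[of "rescaled_L w (Suc n) - rescaled_L w n" "rescaled_L w n - rescaled_L w m"]
    by simp
  also have "\<dots> \<le> tame_error w * (1 / real d ^ m - 1 / real d ^ Suc n)"
    using rescaled_L_step_le[OF assms(1), of n] step.IH by (simp add: algebra_simps)
  finally show ?case .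
qed simp

lemma tame_rescaled_L_limit:
  assumes "tame w"
  shows "rescaled_L w \<longlonglongrightarrow> B w" "norm (B w - rescaled_L w m) \<le> tame_error w / real d ^ m"
proof -
  have E: "tame_error w \<ge> 0" using C d2 by (simp add: tame_error_def)
  have bound: "norm (rescaled_L w n - rescaled_L w m) \<le> tame_error w / real d ^ m" if "m \<le> n" for m n
  proof -
    have "tame_error w * (1 / real d ^ m - 1 / real d ^ n) \<le> tame_error w * (1 / real d ^ m)"
      using E by (intro mult_left_mono) auto
    then show ?thesis using rescaled_L_diff_le[OF assms that] by simp
  qed
  have "Cauchy (rescaled_L w)" using d_gt_1 bound by (rule Cauchy_if_geometric_tail)
  then show lim: "rescaled_L w \<longlonglongrightarrow> B w"
    by (simp add: B_def Cauchy_convergent_iff convergent_LIMSEQ_iff)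
  have "(\<lambda>n. norm (rescaled_L w n - rescaled_L w m)) \<longlonglongrightarrow> norm (B w - rescaled_L w m)"
    by (intro tendsto_intros lim)
  then show "norm (B w - rescaled_L w m) \<le> tame_error w / real d ^ m"
    by (rule LIMSEQ_le_const2) (use bound in auto)
qed

lemma tame_shift_exists:
  assumes "w \<in> strip"
  obtains n where "tame (w + of_nat n)"
proof -
  obtain \<eta> where \<eta>: "0 < \<eta>" "\<eta> < \<beta>" "\<bar>Im w\<bar> < \<eta> / ln lam" using strip_narrower[OF assms] .
  obtain N where N: "\<And>w. \<bar>Im w\<bar> < \<eta> / ln lam \<Longrightarrow> N < Re w \<Longrightarrow> tame w"
    using tame_half_strip[OF \<eta>(1,2)] by blast
  have "tame (w + of_nat (nat \<lceil>N - Re w + 1\<rceil>))"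
    using \<eta>(3) real_nat_ceiling_ge[of "N - Re w + 1"] by (intro N) auto
  then show thesis by (rule that)
qed

lemma rescaled_L_add_nat: "rescaled_L w (k + n) = rescaled_L (w + of_nat n) k / of_nat d ^ n"
  by (simp add: rescaled_L_def power_add add_ac)

lemma rescaled_L_converges:
  assumes "w \<in> strip"
  shows "rescaled_L w \<longlonglongrightarrow> B w"
proof -
  obtain n where n: "tame (w + of_nat n)" using tame_shift_exists[OF assms] .
  have "(\<lambda>k. rescaled_L w (k + n)) \<longlonglongrightarrow> B (w + of_nat n) / of_nat d ^ n"
    unfolding rescaled_L_add_nat using d2 by (intro tendsto_intros tame_rescaled_L_limit(1)[OF n]) auto
  then have "convergent (rescaled_L w)" unfolding convergent_def by (blast intro: LIMSEQ_offset)
  then show ?thesis by (simp add: B_def convergent_LIMSEQ_iff)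
qed

lemma B_add_1:
  assumes "w \<in> strip"
  shows "B (w + 1) = of_nat d * B w"
proof -
  have "rescaled_L (w + 1) = (\<lambda>n. of_nat d * rescaled_L w (Suc n))"
    using d2 by (simp add: rescaled_L_def add_ac fun_eq_iff)
  moreover have "(\<lambda>n. of_nat d * rescaled_L w (Suc n)) \<longlonglongrightarrow> of_nat d * B w"
    using rescaled_L_converges[OF assms] by (intro tendsto_intros) (rule LIMSEQ_Suc)
  ultimately show ?thesis
    using rescaled_L_converges[OF strip_add_1[OF assms]] LIMSEQ_unique by metis
qed

lemma B_add_nat:
  assumes "w \<in> strip"
  shows "B (w + of_nat n) = of_nat d ^ n * B w"
proof (induction n)
  case (Suc n)
  have "B (w + of_nat (Suc n)) = B (w + of_nat n + 1)" by (simp add: add_ac)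
  also have "\<dots> = of_nat d * B (w + of_nat n)" using B_add_1 strip_add_nat[OF assms] by blast
  finally show ?case using Suc by simp
qed simp

lemma B_real: "B (of_real x) \<in> \<real>"
proof (rule closed_sequentially[OF closed_complex_Reals _ rescaled_L_converges[OF of_real_in_strip]])
  fix n
  show "rescaled_L (of_real x) n \<in> \<real>"
    using L_real[of "x + real n"] by (simp add: rescaled_L_def)
qed

lemma norm_B_minus_L_le: "tame w \<Longrightarrow> norm (B w - L w) \<le> tame_error w"
  using tame_rescaled_L_limit(2)[of w 0] by (simp add: rescaled_L_def)

lemma Re_L_tame:
  assumes "tame w"
  shows "Re (L w) = ln (lead_root * norm (psi w))" "2 \<le> Re (L w)"
proof -
  have "exp (Re (L w)) = lead_root * norm (psi w)"
    using exp_L[OF tameD(1)[OF assms]] lead_root_pos by (metis norm_exp_eq_Re norm_mult norm_of_real abs_of_pos)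
  then show Re_L: "Re (L w) = ln (lead_root * norm (psi w))" by (metis ln_exp)
  have "ln (lead_root * R) \<le> ln (lead_root * norm (psi w))"
  proof -
    have "0 < norm (psi w)" using tame_escaped[OF assms] R_pos by linarith
    then show ?thesis using tame_escaped[OF assms] lead_root_pos R_pos by (subst ln_le_cancel_iff) auto
  qed
  then show "2 \<le> Re (L w)" using ln_lead_root_R_ge_2 Re_L by simp
qed

lemma Re_B_tame: "tame w \<Longrightarrow> 1 \<le> Re (B w)"
proof -
  assume "tame w"
  have "Re (L w) - Re (B w) \<le> 1"
    using tame_error_le_1[OF \<open>tame w\<close>] norm_B_minus_L_le[OF \<open>tame w\<close>] abs_Re_le_cmod[of "B w - L w"]
    by simp
  then show ?thesis using Re_L_tame(2)[OF \<open>tame w\<close>] by linarith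
qed

lemma norm_rescaled_L_minus_B_le:
  assumes "w \<in> strip" "tame (w + of_nat n0)" "n0 \<le> n"
  shows "norm (rescaled_L w n - B w) \<le> 2 * C / R / real d ^ n"
proof -
  have "rescaled_L w n - B w = (rescaled_L (w + of_nat n0) (n - n0) - B (w + of_nat n0)) / of_nat d ^ n0"
    using rescaled_L_add_nat[of w "n - n0" n0] B_add_nat[OF assms(1), of n0] assms(3) d2
    by (simp add: diff_divide_distrib)
  then have "norm (rescaled_L w n - B w)
      = norm (B (w + of_nat n0) - rescaled_L (w + of_nat n0) (n - n0)) / real d ^ n0"
    by (simp add: norm_divide norm_power norm_minus_commute)
  also have "\<dots> \<le> tame_error (w + of_nat n0) / real d ^ (n - n0) / real d ^ n0"
    using tame_rescaled_L_limit(2)[OF assms(2)] by (intro divide_right_mono) auto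
  also have "\<dots> \<le> 2 * C / R / real d ^ (n - n0) / real d ^ n0"
    using tame_error_le[OF assms(2)] by (intro divide_right_mono) auto
  also have "\<dots> = 2 * C / R / real d ^ n"
    using assms(3) by (simp add: power_add[symmetric])
  finally show ?thesis .
qed

lemma tame_translate_of_disc:
  assumes "w0 \<in> strip"
  obtains \<rho> n0 where "\<rho> > 0" "cball w0 \<rho> \<subseteq> strip" "\<And>w. w \<in> cball w0 \<rho> \<Longrightarrow> tame (w + of_nat n0)"
proof -
  obtain \<eta> where \<eta>: "0 < \<eta>" "\<eta> < \<beta>" "\<bar>Im w0\<bar> < \<eta> / ln lam" using strip_narrower[OF assms] .
  obtain N where N: "\<And>w. \<bar>Im w\<bar> < \<eta> / ln lam \<Longrightarrow> N < Re w \<Longrightarrow> tame w"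
    using tame_half_strip[OF \<eta>(1,2)] by blast
  define \<rho> where "\<rho> = min 1 ((\<eta> / ln lam - \<bar>Im w0\<bar>) / 2)"
  have "\<rho> \<le> (\<eta> / ln lam - \<bar>Im w0\<bar>) / 2" unfolding \<rho>_def by (rule min.cobounded2)
  then have "2 * \<rho> \<le> \<eta> / ln lam - \<bar>Im w0\<bar>" by (simp add: field_simps)
  moreover have "\<rho> > 0" "\<rho> \<le> 1" using \<eta>(3) by (simp_all add: \<rho>_def)
  ultimately have \<rho>: "\<rho> > 0" "\<rho> \<le> 1" "2 * \<rho> \<le> \<eta> / ln lam - \<bar>Im w0\<bar>" by auto
  define n0 where "n0 = nat \<lceil>N - Re w0 + 2\<rceil>"
  have close: "\<bar>Im w\<bar> < \<eta> / ln lam" "N < Re (w + of_nat n0)" if "w \<in> cball w0 \<rho>" for w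
  proof -
    have "\<bar>Im w - Im w0\<bar> \<le> \<rho>" "\<bar>Re w - Re w0\<bar> \<le> \<rho>"
      using that abs_Im_le_cmod[of "w - w0"] abs_Re_le_cmod[of "w - w0"]
      by (auto simp: dist_norm norm_minus_commute)
    then show "\<bar>Im w\<bar> < \<eta> / ln lam" "N < Re (w + of_nat n0)"
      using \<rho> real_nat_ceiling_ge[of "N - Re w0 + 2"] by (auto simp: n0_def)
  qed
  have "\<eta> / ln lam < \<beta> / ln lam" using \<eta>(2) ln_lam_pos by (simp add: divide_strict_right_mono)
  then have "cball w0 \<rho> \<subseteq> strip" using close(1) by (force simp: strip_def)
  then show thesis
  proof (rule that[OF \<rho>(1)])
    fix w assume "w \<in> cball w0 \<rho>"
    then show "tame (w + of_nat n0)" using close by (intro N) auto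
  qed
qed

lemma rescaled_L_holomorphic: "(\<lambda>w. rescaled_L w n) holomorphic_on strip"
  unfolding rescaled_L_def using d2
  by (intro holomorphic_intros holomorphic_on_compose_gen[OF _ L_holomorphic, unfolded o_def])
    (auto simp: strip_add_nat)

lemma rescaled_L_uniform_limit:
  assumes "S \<subseteq> strip" "\<And>w. w \<in> S \<Longrightarrow> tame (w + of_nat n0)"
  shows "uniform_limit S (\<lambda>n w. rescaled_L w n) B sequentially"
proof (rule uniform_limitI)
  fix e :: real assume "e > 0"
  have "(\<lambda>n. 2 * C / R / real d ^ n) \<longlonglongrightarrow> 0" by (rule LIMSEQ_divide_realpow_zero[OF d_gt_1])
  then have "\<forall>\<^sub>F n in sequentially. 2 * C / R / real d ^ n < e" using \<open>e > 0\<close> by (rule order_tendstoD(2))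
  with eventually_ge_at_top[of n0]
  show "\<forall>\<^sub>F n in sequentially. \<forall>w\<in>S. dist (rescaled_L w n) (B w) < e"
  proof eventually_elim
    case (elim n)
    show ?case using norm_rescaled_L_minus_B_le[of _ n0 n] assms elim by (fastforce simp: dist_norm)
  qed
qed

lemma B_holomorphic: "B holomorphic_on strip"
proof -
  have "\<exists>\<rho>>0. B holomorphic_on ball w0 \<rho>" if w0: "w0 \<in> strip" for w0
  proof -
    obtain \<rho> n0 where \<rho>: "\<rho> > 0" "cball w0 \<rho> \<subseteq> strip" "\<And>w. w \<in> cball w0 \<rho> \<Longrightarrow> tame (w + of_nat n0)"
      using tame_translate_of_disc[OF w0] by blast
    have "uniform_limit (cball w0 \<rho>) (\<lambda>n w. rescaled_L w n) B sequentially"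
      using \<rho>(2,3) by (rule rescaled_L_uniform_limit)
    moreover have "ball w0 \<rho> \<subseteq> strip" using \<rho>(2) ball_subset_cball by blast
    then have "\<forall>\<^sub>F n in sequentially. continuous_on (cball w0 \<rho>) (\<lambda>w. rescaled_L w n) \<and>
        (\<lambda>w. rescaled_L w n) holomorphic_on ball w0 \<rho>"
      using \<rho>(2) rescaled_L_holomorphic
      by (auto intro!: always_eventually holomorphic_on_imp_continuous_on intro: holomorphic_on_subset)
    ultimately obtain "B holomorphic_on ball w0 \<rho>"
      using holomorphic_uniform_limit[OF _ _ trivial_limit_sequentially] by metis
    then show ?thesis using \<rho>(1) by blast
  qed
  then show ?thesis by (simp add: analytic_on_def analytic_imp_holomorphic)
qed

definition F :: "complex \<Rightarrow> complex" where
  "F w = B w / exp (w * of_real (ln (real d)))"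

lemma F_holomorphic: "F holomorphic_on strip"
  unfolding F_def by (intro holomorphic_intros B_holomorphic) auto

lemma F_add_1: "w \<in> strip \<Longrightarrow> F (w + 1) = F w"
  using d2 by (simp add: F_def B_add_1 distrib_right exp_add exp_of_real)

lemma F_real: "F (of_real x) \<in> \<real>"
  using B_real[of x] by (simp add: F_def exp_of_real[symmetric] flip: of_real_mult)

lemma powr_F_eq_B:
  assumes "z \<noteq> 0"
  shows "z powr of_real (ln (real d) / ln lam) * F (log_base_c lam z) = B (log_base_c lam z)"
  using powr_eq_exp_log_base_c[OF lam1 assms] by (simp add: F_def)

lemma log_base_c_in_strip:
  assumes "z \<noteq> 0" "\<bar>Arg z\<bar> < \<beta>"
  shows "log_base_c lam z \<in> strip"
  using assms ln_lam_pos by (simp add: strip_def Im_log_base_c[OF lam1] abs_div divide_strict_right_mono)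

lemma Re_B_pos: "w \<in> strip \<Longrightarrow> Re (B w) > 0"
proof -
  assume "w \<in> strip"
  then obtain n where n: "tame (w + of_nat n)" using tame_shift_exists by blast
  have "Re (B (w + of_nat n)) = real d ^ n * Re (B w)" using B_add_nat[OF \<open>w \<in> strip\<close>] by simp
  then have "0 < real d ^ n * Re (B w)" using Re_B_tame[OF n] by linarith
  then show ?thesis using d2 by (simp add: zero_less_mult_iff)
qed

text \<open>On \<open>v + n\<close> with \<open>v\<close> tame, \<open>Re B\<close> is at least \<open>d\<^sup>n\<close>, hence so is \<open>Re L\<close> up to \<open>1\<close>;
  since \<open>|\<psi>| = exp (Re L) / lead_root\<close>, the error \<open>2C/|\<psi>|\<close> is doubly exponentially small.\<close>

lemma norm_L_minus_B_tame_shift: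
  assumes "tame v"
  shows "norm (L (v + of_nat n) - B (v + of_nat n)) \<le> 2 * C * lead_root * exp 1 * exp (- (real d ^ n))"
proof -
  define w where "w = v + of_nat n"
  have w: "tame w" unfolding w_def by (rule tame_add_nat[OF assms])
  have "Re (B w) = real d ^ n * Re (B v)" using B_add_nat[OF tameD(1)[OF assms]] by (simp add: w_def)
  then have "real d ^ n \<le> Re (B w)" using Re_B_tame[OF assms] by (simp add: mult_le_cancel_left1)
  moreover have "Re (B w) - Re (L w) \<le> 1"
    using tame_error_le_1[OF w] norm_B_minus_L_le[OF w] abs_Re_le_cmod[of "B w - L w"] by simp
  ultimately have ReL: "real d ^ n - 1 \<le> Re (L w)" by linarith
  have "0 < norm (psi w)" using tame_escaped[OF w] R_pos by linarith
  then have "norm (psi w) = exp (Re (L w)) / lead_root"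
    using Re_L_tame(1)[OF w] lead_root_pos by simp
  then have "tame_error w \<le> 2 * C * lead_root / exp (Re (L w))"
    using tame_error_le_norm_psi[of w] lead_root_pos by simp
  also have "\<dots> \<le> 2 * C * lead_root / exp (real d ^ n - 1)"
    using ReL C lead_root_pos by (intro divide_left_mono) auto
  also have "\<dots> = 2 * C * lead_root * exp 1 * exp (- (real d ^ n))"
    by (simp add: exp_diff exp_minus field_simps)
  finally show ?thesis using norm_B_minus_L_le[OF w] by (simp add: w_def norm_minus_commute)
qed

lemma norm_L_minus_B_le_exp:
  assumes "0 < \<eta>" "\<eta> < \<beta>" "A > 0" "\<delta> > 0"
  obtains N' where "\<And>w. \<bar>Im w\<bar> < \<eta> / ln lam \<Longrightarrow> N' < Re w \<Longrightarrow> norm (L w - B w) \<le> \<delta> * exp (- (A * Re w))"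
proof -
  obtain N where N: "\<And>w. \<bar>Im w\<bar> < \<eta> / ln lam \<Longrightarrow> N < Re w \<Longrightarrow> tame w"
    using tame_half_strip[OF assms(1,2)] by blast
  define K where "K = 2 * C * lead_root * exp 1"
  have K: "K > 0" using C lead_root_pos by (simp add: K_def)
  obtain n1 where n1: "\<And>n. n1 \<le> n \<Longrightarrow> ln (K / \<delta>) + A * (N + 1) + A * real n \<le> real d ^ n"
    using pow_beats_linear[of "real d"] d2 by (metis of_nat_numeral of_nat_le_iff)
  show thesis
  proof (rule that[of "N + real n1 + 1"])
    fix w assume w: "\<bar>Im w\<bar> < \<eta> / ln lam" "N + real n1 + 1 < Re w"
    define n where "n = nat (\<lceil>Re w - N\<rceil> - 1)"
    have n: "Re w - N - 1 \<le> real n" "real n < Re w - N" "n1 \<le> n"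
      using w(2) by (auto simp: n_def) linarith+
    have "tame (w - of_nat n)" using w(1) n(2) by (intro N) auto
    then have "norm (L w - B w) \<le> K * exp (- (real d ^ n))"
      using norm_L_minus_B_tame_shift[of "w - of_nat n" n] by (simp add: K_def)
    also have "\<dots> \<le> \<delta> * exp (- (A * (N + real n + 1)))"
    proof -
      have "ln (K / \<delta>) + A * (N + real n + 1) \<le> real d ^ n" using n1[OF n(3)] by (simp add: algebra_simps)
      then have "exp (ln K - real d ^ n) \<le> exp (ln \<delta> - A * (N + real n + 1))"
        using K assms(4) by (simp add: ln_div)
      then show ?thesis using K assms(4) by (simp add: exp_diff exp_minus divide_inverse)
    qed
    also have "\<dots> \<le> \<delta> * exp (- (A * Re w))"
      using n(1) assms(3,4) by (intro mult_left_mono) auto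
    finally show "norm (L w - B w) \<le> \<delta> * exp (- (A * Re w))" .
  qed
qed

lemma norm_L_minus_B_decay:
  assumes "\<epsilon> > 0" "M > 0" "\<delta> > 0"
  obtains R' where "\<And>z. z \<noteq> 0 \<Longrightarrow> \<bar>Arg z\<bar> \<le> \<beta> - \<epsilon> \<Longrightarrow> norm z > R' \<Longrightarrow>
    norm (L (log_base_c lam z) - B (log_base_c lam z)) \<le> \<delta> * norm z powr (- M)"
proof -
  define \<eta> where "\<eta> = max (\<beta> - \<epsilon> / 2) (\<beta> / 2)"
  have \<eta>: "0 < \<eta>" "\<eta> < \<beta>" "\<beta> - \<epsilon> < \<eta>" using assms(1) beta by (auto simp: \<eta>_def)
  obtain N where N: "\<And>w. \<bar>Im w\<bar> < \<eta> / ln lam \<Longrightarrow> N < Re w \<Longrightarrow>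
      norm (L w - B w) \<le> \<delta> * exp (- (M * ln lam * Re w))"
    using norm_L_minus_B_le_exp[OF \<eta>(1,2) _ assms(3), of "M * ln lam"] assms(2) ln_lam_pos by auto
  show thesis
  proof (rule that[of "exp (ln lam * N)"])
    fix z assume z: "z \<noteq> 0" "\<bar>Arg z\<bar> \<le> \<beta> - \<epsilon>" "exp (ln lam * N) < norm z"
    define w where "w = log_base_c lam z"
    have Re_w: "Re w = ln (norm z) / ln lam" by (simp add: w_def Re_log_base_c[OF lam1 z(1)])
    have "\<bar>Im w\<bar> < \<eta> / ln lam"
      using z(2) \<eta>(3) ln_lam_pos by (simp add: w_def Im_log_base_c[OF lam1 z(1)] abs_div divide_strict_right_mono)
    moreover have "ln lam * N < ln (norm z)" using z(1,3) by (metis exp_less_cancel_iff exp_ln zero_less_norm_iff)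
    then have "N < Re w" using ln_lam_pos by (simp add: Re_w field_simps)
    moreover have "exp (- (M * ln lam * Re w)) = norm z powr (- M)"
      using z(1) ln_lam_pos by (simp add: powr_def Re_w)
    ultimately show "norm (L (log_base_c lam z) - B (log_base_c lam z)) \<le> \<delta> * norm z powr (- M)"
      using N unfolding w_def by metis
  qed
qed

lemma Phi_eq_exp_L:
  assumes "z \<noteq> 0" "\<bar>Arg z\<bar> < \<beta>"
  shows "\<Phi> z = 1 / of_real lead_root * exp (L (log_base_c lam z))"
  using exp_L[OF log_base_c_in_strip[OF assms]] exp_log_base_c[OF lam1 assms(1)] lead_root_pos
  by (simp add: psi_def field_simps)

lemma Phi_asymptotics:
  assumes "\<epsilon> > 0" "M > 0"
  shows "\<exists>E. (\<forall>z. z \<noteq> 0 \<and> \<bar>Arg z\<bar> \<le> \<beta> - \<epsilon> \<longrightarrow>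
      \<Phi> z = 1 / of_real lead_root * exp (z powr of_real (ln (real d) / ln lam) * F (log_base_c lam z) + E z)) \<and>
    (\<forall>\<delta>>0. \<exists>R. \<forall>z. z \<noteq> 0 \<and> \<bar>Arg z\<bar> \<le> \<beta> - \<epsilon> \<and> norm z > R \<longrightarrow> norm (E z) \<le> \<delta> * norm z powr (- M))"
proof (intro exI[of _ "\<lambda>z. L (log_base_c lam z) - B (log_base_c lam z)"] conjI allI impI)
  fix z assume z: "z \<noteq> 0 \<and> \<bar>Arg z\<bar> \<le> \<beta> - \<epsilon>"
  then have "\<bar>Arg z\<bar> < \<beta>" using assms(1) by linarith
  then show "\<Phi> z = 1 / of_real lead_root * exp (z powr of_real (ln (real d) / ln lam) * F (log_base_c lam z)
      + (L (log_base_c lam z) - B (log_base_c lam z)))"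
    using Phi_eq_exp_L powr_F_eq_B z by simp
next
  fix \<delta> :: real assume "\<delta> > 0"
  then show "\<exists>R. \<forall>z. z \<noteq> 0 \<and> \<bar>Arg z\<bar> \<le> \<beta> - \<epsilon> \<and> norm z > R \<longrightarrow>
      norm (L (log_base_c lam z) - B (log_base_c lam z)) \<le> \<delta> * norm z powr (- M)"
    using norm_L_minus_B_decay[OF assms] by metis
qed

lemma Re_powr_F_pos:
  assumes "z \<noteq> 0" "\<bar>Arg z\<bar> < \<beta>"
  shows "Re (z powr of_real (ln (real d) / ln lam) * F (log_base_c lam z)) > 0"
  using powr_F_eq_B[OF assms(1)] Re_B_pos[OF log_base_c_in_strip[OF assms]] by simp

end

lemma (in poincare_function) poincare_log_exists:
  obtains R C L where "poincare_log p d lam \<beta> \<Phi> R C L"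
proof -
  obtain R C where RC: "escape_radius p R" "C > 0"
    "\<And>u. R \<le> norm u \<Longrightarrow> norm (poly p u / (lead_coeff p * u ^ d) - 1) \<le> C / norm u"
    "8 * C \<le> R" "2 \<le> ln (lead_root * R)"
    using radius_constants_exist by blast
  obtain L where L: "L holomorphic_on strip" "\<And>w. w \<in> strip \<Longrightarrow> exp (L w) = of_real lead_root * psi w"
    "\<And>x. L (of_real x) \<in> \<real>"
    using strip_log_exists by blast
  show thesis
    using RC L by (intro that poincare_log.intro poincare_function_axioms poincare_log_axioms.intro)
qed

theorem theorem1:
  fixes p :: "complex poly" and d :: nat and lam \<beta> :: real and \<Phi> :: "complex \<Rightarrow> complex"
  assumes real_coeffs: "\<forall>i. coeff p i \<in> \<real>"
    and deg: "degree p = d" "d \<ge> 2"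
    and p0: "coeff p 0 = 0"
    and p1: "coeff p 1 = of_real lam" "lam > 1"
    and beta: "\<beta> > 0" "angular_region \<beta> \<subseteq> fatou_inf p"
    and Phi_hol0: "\<exists>r>0. \<Phi> holomorphic_on ball 0 r"
    and Phi_eq: "\<forall>z. \<Phi> (of_real lam * z) = poly p (\<Phi> z)"
    and Phi0: "\<Phi> 0 = 0"
    and Phi'0: "(\<Phi> has_field_derivative 1) (at 0)"
  shows "\<Phi> holomorphic_on UNIV \<and>
    (\<exists>F :: complex \<Rightarrow> complex.
       F holomorphic_on {w. \<bar>Im w\<bar> < \<beta> / ln lam} \<and>
       (\<forall>w. \<bar>Im w\<bar> < \<beta> / ln lam \<longrightarrow> F (w + 1) = F w) \<and>
       (\<forall>x::real. F (of_real x) \<in> \<real>) \<and>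
       (\<forall>\<epsilon>>0. \<forall>M>0.
          (\<exists>E :: complex \<Rightarrow> complex.
             (\<forall>z. z \<noteq> 0 \<and> \<bar>Arg z\<bar> \<le> \<beta> - \<epsilon> \<longrightarrow>
                \<Phi> z = (1 / of_real (root (d - 1) (Re (lead_coeff p)))) *
                        exp (z powr of_real (ln (real d) / ln lam) * F (log_base_c lam z) + E z)) \<and>
             (\<forall>\<delta>>0. \<exists>R. \<forall>z. z \<noteq> 0 \<and> \<bar>Arg z\<bar> \<le> \<beta> - \<epsilon> \<and> norm z > R \<longrightarrow>
                norm (E z) \<le> \<delta> * norm z powr (- M)))) \<and>
       (\<forall>\<epsilon>>0. \<forall>z. z \<noteq> 0 \<and> \<bar>Arg z\<bar> \<le> \<beta> - \<epsilon> \<longrightarrow>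
          Re (z powr of_real (ln (real d) / ln lam) * F (log_base_c lam z)) > 0))"
proof -
  interpret poincare_function p d lam \<beta> \<Phi>
    using assms by unfold_locales auto
  obtain R C L where "poincare_log p d lam \<beta> \<Phi> R C L"
    using poincare_log_exists by blast
  then interpret poincare_log p d lam \<beta> \<Phi> R C L .
  show ?thesis
    by (rule conjI[OF Phi_holomorphic], rule exI[of _ F], intro conjI allI impI)
      (use F_holomorphic F_add_1 F_real Re_powr_F_pos Phi_asymptotics[unfolded lead_root_def]
        in \<open>auto simp: strip_def\<close>)
qed

end
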